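(* Let $p$ be a prime, $m\geq 1$ an integer, $E=\bigcup_{i=0}^{m-1}p^i\mathbb{Z}_p^\times$ identified with $\mathbb{Q}_p^\ast/p^{m\mathbb{Z}}$, and let $D$ be the operator on functions on $E$ given by $$D\phi(x)=-c_p\int_E H(z,x)\big(\phi(z)-\phi(x)\big)\,d^\ast z,\qquad c_p=\frac{p(1-p^{-1})^2}{1-p^{-2}},$$ $$H(z,x)=\frac{|x|\,|z|}{|x-z|^2}+\frac{1}{p^m-1}\Big(\frac{|x|}{|z|}+\frac{|z|}{|x|}\Big).$$ Every continuous multiplicative character $\pi$ of $\mathbb{Q}_p^\ast/p^{m\mathbb{Z}}$ is an eigenfunction of $D$. Writing $\pi(p^k u)=\zeta(k)\hat\pi(u)$ for $k\in\mathbb{Z}/m\mathbb{Z}$, $u\in\mathbb{Z}_p^\times$, with $\zeta$ a character of $\mathbb{Z}/m\mathbb{Z}$ and $\hat\pi$ a continuous character of $\mathbb{Z}_p^\times$, the eigenvalue is: (i) if $\hat\pi$ is nontrivial with conductor $n\geq 1$: $\lambda=(p-1)p^{n-1}$ (independent of $\zeta$ and of $m$); (ii) if $\hat\pi$ is trivial and $\zeta(1)=\omega$ (an $m$-th root of unity): $\lambda=\dfrac{p(p-1)(2-\omega-\overline{\omega})}{p^2-p(\omega+\overline{\omega})+1}$.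
   Context: $|x|=p^{-v(x)}$ with $v$ the $p$-adic valuation; $dx$ is the additive Haar measure with $\mathbb{Z}_p$ of measure $1$ and $d^\ast x=dx/|x|$. Products of elements of $E$ are taken modulo $p^{m\mathbb{Z}}$ with representative in $E$. The conductor of a nontrivial character $\hat\pi$ of $\mathbb{Z}_p^\times$ is the smallest integer $n\geq 1$ such that $\hat\pi$ is trivial on $1+p^n\mathbb{Z}_p$. *)

theory Defs
  imports "HOL-Probability.Probability"
begin

text \<open>p-adic integers Z_p are modelled by their p-adic digit sequences
  u = (u 0, u 1, ...), u i < p, standing for sum of u i * p^i.\<close>

definition Zp :: "nat \<Rightarrow> (nat \<Rightarrow> nat) set" where
  "Zp p = {u. \<forall>i. u i < p}"

definition Zp_units :: "nat \<Rightarrow> (nat \<Rightarrow> nat) set" where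
  "Zp_units p = {u \<in> Zp p. u 0 \<noteq> 0}"

definition zp_res :: "nat \<Rightarrow> (nat \<Rightarrow> nat) \<Rightarrow> nat \<Rightarrow> nat" where
  "zp_res p u n = (\<Sum>i<n. u i * p ^ i)"

text \<open>Multiplication in Z_p (digit i of the product is read off the product mod p^(i+1)).\<close>
definition zp_mult :: "nat \<Rightarrow> (nat \<Rightarrow> nat) \<Rightarrow> (nat \<Rightarrow> nat) \<Rightarrow> (nat \<Rightarrow> nat)" where
  "zp_mult p u w = (\<lambda>i. ((zp_res p u (Suc i) * zp_res p w (Suc i)) mod p ^ Suc i) div p ^ i)"

text \<open>p-adic absolute value |u - w| of a difference in Z_p: p^(-v(u-w)), where
  v(u-w) is the first index at which the digits differ.\<close>
definition zp_abs_diff :: "nat \<Rightarrow> (nat \<Rightarrow> nat) \<Rightarrow> (nat \<Rightarrow> nat) \<Rightarrow> real" where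
  "zp_abs_diff p u w = (if u = w then 0 else 1 / real p ^ (LEAST i. u i \<noteq> w i))"

text \<open>Normalised additive Haar measure on Z_p (Z_p has measure 1): product of
  uniform measures on the digits.\<close>
definition zp_haar :: "nat \<Rightarrow> (nat \<Rightarrow> nat) measure" where
  "zp_haar p = (\<Pi>\<^sub>M i\<in>(UNIV::nat set). uniform_count_measure {..<p})"

text \<open>E = union over i<m of p^i Z_p^x; the element p^k u is represented by (k, u).\<close>
definition Eset :: "nat \<Rightarrow> nat \<Rightarrow> (nat \<times> (nat \<Rightarrow> nat)) set" where
  "Eset p m = {(k, u). k < m \<and> u \<in> Zp_units p}"

definition E_abs :: "nat \<Rightarrow> nat \<times> (nat \<Rightarrow> nat) \<Rightarrow> real" where
  "E_abs p x = 1 / real p ^ fst x"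

text \<open>|x - z| for x = p^k u, z = p^j w (computed in Q_p with these representatives).\<close>
definition E_abs_diff :: "nat \<Rightarrow> nat \<times> (nat \<Rightarrow> nat) \<Rightarrow> nat \<times> (nat \<Rightarrow> nat) \<Rightarrow> real" where
  "E_abs_diff p x z =
     (if fst x \<noteq> fst z then 1 / real p ^ min (fst x) (fst z)
      else (1 / real p ^ fst x) * zp_abs_diff p (snd x) (snd z))"

definition c_p :: "nat \<Rightarrow> real" where
  "c_p p = real p * (1 - 1 / real p)\<^sup>2 / (1 - 1 / (real p)\<^sup>2)"

definition kernelH :: "nat \<Rightarrow> nat \<Rightarrow> nat \<times> (nat \<Rightarrow> nat) \<Rightarrow> nat \<times> (nat \<Rightarrow> nat) \<Rightarrow> real" where
  "kernelH p m z x =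
     E_abs p x * E_abs p z / (E_abs_diff p x z)\<^sup>2
     + 1 / (real p ^ m - 1) * (E_abs p x / E_abs p z + E_abs p z / E_abs p x)"

text \<open>The multiplicative measure d*z = dz/|z| on p^k Z_p^x is the
  image of the Haar measure dw restricted to Z_p^x under w \<mapsto> p^k w
  (since d(p^k w) = p^(-k) dw and |p^k w| = p^(-k)); hence the integral over E
  is a sum over k < m of integrals over Z_p^x.\<close>
definition Dop :: "nat \<Rightarrow> nat \<Rightarrow> (nat \<times> (nat \<Rightarrow> nat) \<Rightarrow> complex) \<Rightarrow> nat \<times> (nat \<Rightarrow> nat) \<Rightarrow> complex" where
  "Dop p m \<phi> x =
     - complex_of_real (c_p p) *
       (\<Sum>k<m. \<integral>w. indicator (Zp_units p) w *
            (complex_of_real (kernelH p m (k, w) x) * (\<phi> (k, w) - \<phi> x)) \<partial>zp_haar p)"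

definition zp_character :: "nat \<Rightarrow> ((nat \<Rightarrow> nat) \<Rightarrow> complex) \<Rightarrow> bool" where
  "zp_character p chi \<longleftrightarrow>
     (\<forall>u\<in>Zp_units p. chi u \<noteq> 0) \<and>
     (\<forall>u\<in>Zp_units p. \<forall>w\<in>Zp_units p. chi (zp_mult p u w) = chi u * chi w)"

text \<open>Continuity on Z_p^x for the p-adic topology (balls are u + p^N Z_p).\<close>
definition zp_continuous :: "nat \<Rightarrow> ((nat \<Rightarrow> nat) \<Rightarrow> complex) \<Rightarrow> bool" where
  "zp_continuous p chi \<longleftrightarrow>
     (\<forall>u\<in>Zp_units p. \<forall>e>0. \<exists>N. \<forall>w\<in>Zp_units p.
        zp_res p w N = zp_res p u N \<longrightarrow> cmod (chi w - chi u) < e)"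

definition zp_trivial :: "nat \<Rightarrow> ((nat \<Rightarrow> nat) \<Rightarrow> complex) \<Rightarrow> bool" where
  "zp_trivial p chi \<longleftrightarrow> (\<forall>u\<in>Zp_units p. chi u = 1)"

definition conductor :: "nat \<Rightarrow> ((nat \<Rightarrow> nat) \<Rightarrow> complex) \<Rightarrow> nat" where
  "conductor p chi = (LEAST n. n \<ge> 1 \<and>
     (\<forall>u\<in>Zp_units p. zp_res p u n = 1 \<longrightarrow> chi u = 1))"

end

theory Submission
  imports Defs "HOL-Number_Theory.Cong"
begin

text \<open>
  A continuous character \<open>\<chi>\<close> of \<open>Z_p^x\<close> is trivial on \<open>1 + p^N Z_p\<close> for some \<open>N\<close>, so on each
  shell \<open>p^k Z_p^x\<close> the integrand of \<open>D\<close> depends only on \<open>w mod p^N\<close>, and every Haar integral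
  becomes an average over \<open>(Z/p^N)^x\<close>.

  Between different shells the kernel is a constant \<open>H(k - j)\<close>, so shell \<open>k\<close> contributes
  \<open>H(k - j) (\<omega>^k \<integral> \<chi> - \<pi>(x) vol(Z_p^x))\<close>, the integral being over \<open>Z_p^x\<close>. For nontrivial \<open>\<chi>\<close>
  the integral vanishes; for trivial \<open>\<chi>\<close> the sum over \<open>k\<close> is a pair of geometric series in
  \<open>p\<omega>\<close> and \<open>p\<omega>\<^sup>-\<^sup>1\<close>, which gives the second eigenvalue.

  Within the shell of \<open>x = p^j u\<close> the kernel \<open>p^(2 v(w - u))\<close> is a weighted sum of the indicators
  of the balls \<open>u (1 + p^i Z_p)\<close>. After the substitution \<open>w = u s\<close>, the sum of \<open>\<chi>(s) - 1\<close> over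
  \<open>1 + p^i Z_p\<close> is minus its measure for \<open>i\<close> below the conductor \<open>n\<close> and zero from \<open>n\<close> on; the
  resulting geometric sum in \<open>p\<close> produces \<open>(p - 1) p^(n - 1)\<close>, and the constant part
  \<open>2 / (p^m - 1)\<close> of the kernel cancels against the other shells.
\<close>

section \<open>Arithmetic of p-adic digit sequences\<close>

definition zp_of_nat :: "nat \<Rightarrow> nat \<Rightarrow> nat \<Rightarrow> nat" where
  "zp_of_nat p r = (\<lambda>i. r div p ^ i mod p)"

lemma zp_res_0 [simp]: "zp_res p u 0 = 0"
  by (simp add: zp_res_def)

lemma zp_res_Suc: "zp_res p u (Suc n) = zp_res p u n + u n * p ^ n"
  by (simp add: zp_res_def)

lemma zp_res_less:
  assumes "u \<in> Zp p"
  shows "zp_res p u n < p ^ n"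
proof (induction n)
  case 0
  then show ?case by simp
next
  case (Suc n)
  have "u n < p"
    using assms by (simp add: Zp_def)
  then have "u n \<le> p - 1"
    by simp
  then have "zp_res p u (Suc n) < p ^ n + (p - 1) * p ^ n"
    using Suc by (simp add: zp_res_Suc add_less_le_mono)
  also have "\<dots> = p ^ Suc n"
    using assms by (cases p) (auto simp: Zp_def)
  finally show ?case .
qed

lemma zp_res_mod_power:
  assumes "u \<in> Zp p" "i \<le> n"
  shows "zp_res p u n mod p ^ i = zp_res p u i"
  using assms(2)
proof (induction n)
  case 0
  then show ?case by simp
next
  case (Suc n)
  show ?case
  proof (cases "i = Suc n")
    case True
    then show ?thesis using zp_res_less[OF assms(1)] by (metis mod_less)
  next
    case False
    then have "i \<le> n" using Suc.prems by simp
    then have "p ^ i dvd u n * p ^ n" by (simp add: le_imp_power_dvd)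
    then have "zp_res p u (Suc n) mod p ^ i = zp_res p u n mod p ^ i"
      by (metis add.right_neutral dvd_imp_mod_0 mod_add_right_eq zp_res_Suc)
    then show ?thesis
      using Suc.IH[OF \<open>i \<le> n\<close>] by simp
  qed
qed

lemma zp_res_mod_base:
  assumes "u \<in> Zp p" "1 \<le> n"
  shows "zp_res p u n mod p = u 0"
  using zp_res_mod_power[OF assms(1), of 1 n] assms(2) by (simp add: zp_res_def)

lemma zp_res_div_power_mod:
  assumes "u \<in> Zp p" "i < n"
  shows "zp_res p u n div p ^ i mod p = u i"
proof -
  have "p > 0" using assms(1) by (auto simp: Zp_def)
  have "p ^ i * (zp_res p u n div p ^ i mod p) + zp_res p u i = zp_res p u n mod p ^ Suc i"
    using mod_mult2_eq[of "zp_res p u n" "p ^ i" p] zp_res_mod_power[OF assms(1), of i n] assms(2)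
    by (simp add: mult.commute)
  also have "\<dots> = zp_res p u i + u i * p ^ i"
    using zp_res_mod_power[OF assms(1), of "Suc i" n] assms(2) by (simp add: zp_res_Suc)
  finally show ?thesis using \<open>p > 0\<close> by (simp add: mult.commute)
qed

lemma zp_res_eq_iff:
  assumes "u \<in> Zp p" "w \<in> Zp p"
  shows "zp_res p u n = zp_res p w n \<longleftrightarrow> (\<forall>i<n. u i = w i)"
proof
  assume "zp_res p u n = zp_res p w n"
  then show "\<forall>i<n. u i = w i"
    using zp_res_div_power_mod[OF assms(1)] zp_res_div_power_mod[OF assms(2)] by metis
qed (simp add: zp_res_def)

lemma zp_eqI:
  assumes "u \<in> Zp p" "w \<in> Zp p" "\<And>n. zp_res p u n = zp_res p w n"
  shows "u = w"
proof
  fix i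
  show "u i = w i" using zp_res_eq_iff[OF assms(1,2), of "Suc i"] assms(3) by auto
qed

lemma zp_of_nat_in_Zp: "p > 0 \<Longrightarrow> zp_of_nat p r \<in> Zp p"
  by (simp add: zp_of_nat_def Zp_def)

lemma zp_res_zp_of_nat: "zp_res p (zp_of_nat p r) n = r mod p ^ n"
proof (induction n)
  case 0
  then show ?case by simp
next
  case (Suc n)
  then show ?case
    using mod_mult2_eq[of r "p ^ n" p] by (simp add: zp_res_Suc zp_of_nat_def mult.commute)
qed

lemma zp_mult_in_Zp:
  assumes "p > 0"
  shows "zp_mult p u w \<in> Zp p"
proof -
  have "x mod p ^ Suc i div p ^ i < p" for x i
  proof -
    have "x mod p ^ Suc i < p * p ^ i"
      using assms by simp
    then show ?thesis by (rule less_mult_imp_div_less)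
  qed
  then show ?thesis by (simp add: zp_mult_def Zp_def)
qed

lemma zp_res_zp_mult:
  assumes "p > 0" "u \<in> Zp p" "w \<in> Zp p"
  shows "zp_res p (zp_mult p u w) n = zp_res p u n * zp_res p w n mod p ^ n"
proof (induction n)
  case 0
  then show ?case by simp
next
  case (Suc n)
  define X where "X = zp_res p u (Suc n) * zp_res p w (Suc n)"
  have "zp_res p u n * zp_res p w n mod p ^ n
      = zp_res p u (Suc n) mod p ^ n * (zp_res p w (Suc n) mod p ^ n) mod p ^ n"
    using zp_res_mod_power[OF assms(2), of n "Suc n"] zp_res_mod_power[OF assms(3), of n "Suc n"]
    by simp
  also have "\<dots> = X mod p ^ n"
    unfolding X_def by (rule mod_mult_eq)
  also have "\<dots> = X mod p ^ Suc n mod p ^ n"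
    by (simp add: mod_mod_cancel le_imp_power_dvd)
  finally have "zp_res p (zp_mult p u w) (Suc n)
      = X mod p ^ Suc n mod p ^ n + X mod p ^ Suc n div p ^ n * p ^ n"
    using Suc by (simp only: zp_res_Suc zp_mult_def X_def)
  also have "\<dots> = X mod p ^ Suc n"
    by (rule mod_div_mult_eq)
  finally show ?case by (simp only: X_def)
qed

lemma zp_res_unit_coprime:
  assumes "prime p" "u \<in> Zp_units p"
  shows "coprime (zp_res p u n) (p ^ n)"
proof (cases "n = 0")
  case False
  then have "zp_res p u n mod p \<noteq> 0"
    using zp_res_mod_base[of u p n] assms(2) by (simp add: Zp_units_def)
  then have "\<not> p dvd zp_res p u n"
    by (simp add: dvd_eq_mod_eq_0)
  then show ?thesis
    by (rule prime_imp_power_coprime[OF assms(1)])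
qed simp

lemma zp_mult_in_units:
  assumes "prime p" "u \<in> Zp_units p" "w \<in> Zp_units p"
  shows "zp_mult p u w \<in> Zp_units p"
proof -
  have p0: "p > 0" using assms(1) prime_gt_0_nat by blast
  have "\<not> p dvd u 0" "\<not> p dvd w 0"
    using assms(2,3) by (auto simp: Zp_units_def Zp_def nat_dvd_not_less)
  then have "\<not> p dvd u 0 * w 0"
    using assms(1) by (simp add: prime_dvd_mult_iff)
  moreover have "zp_mult p u w 0 = u 0 * w 0 mod p"
    using zp_res_zp_mult[OF p0, of u w 1] assms(2,3) by (simp add: zp_res_def Zp_units_def)
  ultimately show ?thesis
    using zp_mult_in_Zp[OF p0] by (simp add: Zp_units_def dvd_eq_mod_eq_0)
qed

definition zp_inv_res :: "nat \<Rightarrow> (nat \<Rightarrow> nat) \<Rightarrow> nat \<Rightarrow> nat" where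
  "zp_inv_res p u n = (SOME x. x < p ^ n \<and> [zp_res p u n * x = 1] (mod p ^ n))"

lemma zp_inv_res:
  assumes "prime p" "u \<in> Zp_units p"
  shows "zp_inv_res p u n < p ^ n \<and> [zp_res p u n * zp_inv_res p u n = 1] (mod p ^ n)"
proof -
  have p0: "p > 0" using assms(1) prime_gt_0_nat by blast
  obtain x where x: "[zp_res p u n * x = 1] (mod p ^ n)"
    using cong_solve_coprime_nat[OF zp_res_unit_coprime[OF assms, of n]] by auto
  then have "[zp_res p u n * (x mod p ^ n) = 1] (mod p ^ n)"
    by (simp add: cong_def mod_mult_right_eq)
  then have "\<exists>y. y < p ^ n \<and> [zp_res p u n * y = 1] (mod p ^ n)"
    using p0 by (intro exI[of _ "x mod p ^ n"]) simp
  then show ?thesis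
    unfolding zp_inv_res_def by (rule someI_ex)
qed

lemma zp_inv_res_unique:
  assumes "prime p" "u \<in> Zp_units p" "y < p ^ n" "[zp_res p u n * y = 1] (mod p ^ n)"
  shows "y = zp_inv_res p u n"
proof -
  have "[zp_res p u n * y = zp_res p u n * zp_inv_res p u n] (mod p ^ n)"
    using zp_inv_res[OF assms(1,2), of n] assms(4) by (meson cong_sym cong_trans)
  then have "[y = zp_inv_res p u n] (mod p ^ n)"
    using cong_mult_lcancel_nat[OF zp_res_unit_coprime[OF assms(1,2)]] by blast
  then show ?thesis
    using zp_inv_res[OF assms(1,2), of n] assms(3) by (simp add: cong_def)
qed

lemma zp_inv_res_Suc_mod:
  assumes "prime p" "u \<in> Zp_units p"
  shows "zp_inv_res p u (Suc n) mod p ^ n = zp_inv_res p u n"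
proof (rule zp_inv_res_unique[OF assms])
  have p0: "p > 0" using assms(1) prime_gt_0_nat by blast
  then show "zp_inv_res p u (Suc n) mod p ^ n < p ^ n" by simp
  have "[zp_res p u (Suc n) * zp_inv_res p u (Suc n) = 1] (mod p ^ n)"
    using zp_inv_res[OF assms, of "Suc n"] by (auto intro: cong_dvd_modulus_nat simp: le_imp_power_dvd)
  moreover have "zp_res p u (Suc n) mod p ^ n = zp_res p u n"
    using zp_res_mod_power[of u p n "Suc n"] assms(2) by (simp add: Zp_units_def)
  ultimately show "[zp_res p u n * (zp_inv_res p u (Suc n) mod p ^ n) = 1] (mod p ^ n)"
    by (metis cong_def mod_mult_eq)
qed

definition zp_inv :: "nat \<Rightarrow> (nat \<Rightarrow> nat) \<Rightarrow> (nat \<Rightarrow> nat)" where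
  "zp_inv p u = (\<lambda>i. zp_inv_res p u (Suc i) div p ^ i)"

lemma zp_res_zp_inv:
  assumes "prime p" "u \<in> Zp_units p"
  shows "zp_res p (zp_inv p u) n = zp_inv_res p u n"
proof (induction n)
  case 0
  then show ?case using zp_inv_res[OF assms, of 0] by simp
next
  case (Suc n)
  then have "zp_res p (zp_inv p u) (Suc n)
      = zp_inv_res p u (Suc n) mod p ^ n + zp_inv_res p u (Suc n) div p ^ n * p ^ n"
    using zp_inv_res_Suc_mod[OF assms, of n] by (simp add: zp_res_Suc zp_inv_def)
  then show ?case by (simp only: mod_div_mult_eq)
qed

lemma zp_inv_in_units:
  assumes "prime p" "u \<in> Zp_units p"
  shows "zp_inv p u \<in> Zp_units p"
proof -
  have p2: "p \<ge> 2" using assms(1) prime_ge_2_nat by blast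
  have "zp_inv_res p u (Suc i) div p ^ i < p" for i
    using zp_inv_res[OF assms, of "Suc i"] by (simp add: less_mult_imp_div_less)
  moreover have "zp_res p u 1 * zp_inv_res p u 1 mod p = 1"
    using zp_inv_res[OF assms, of 1] p2 by (simp add: cong_def)
  then have "zp_inv_res p u 1 \<noteq> 0"
    by (metis mod_0 mult_0_right zero_neq_one)
  ultimately show ?thesis
    by (simp add: Zp_units_def Zp_def zp_inv_def)
qed

lemma zp_mult_zp_inv_cancel:
  assumes "prime p" "u \<in> Zp_units p" "w \<in> Zp_units p"
  shows "zp_mult p u (zp_mult p (zp_inv p u) w) = w"
proof -
  have p0: "p > 0" using assms(1) prime_gt_0_nat by blast
  have Zu: "u \<in> Zp p" and Zw: "w \<in> Zp p" and Zi: "zp_inv p u \<in> Zp p"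
    using assms zp_inv_in_units[OF assms(1,2)] by (auto simp: Zp_units_def)
  show ?thesis
  proof (rule zp_eqI[OF zp_mult_in_Zp[OF p0] Zw])
    fix n
    define a b where "a = zp_res p u n" and "b = zp_inv_res p u n"
    have ab: "a * b mod p ^ n = 1 mod p ^ n"
      using zp_inv_res[OF assms(1,2), of n] by (simp add: a_def b_def cong_def)
    have "zp_res p (zp_mult p u (zp_mult p (zp_inv p u) w)) n
        = a * (b * zp_res p w n mod p ^ n) mod p ^ n"
      using zp_res_zp_mult[OF p0 Zu zp_mult_in_Zp[OF p0]] zp_res_zp_mult[OF p0 Zi Zw]
        zp_res_zp_inv[OF assms(1,2)] by (simp add: a_def b_def)
    also have "\<dots> = (a * b mod p ^ n) * zp_res p w n mod p ^ n"
      by (simp add: mod_mult_right_eq mod_mult_left_eq mult.assoc)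
    also have "\<dots> = zp_res p w n"
      using zp_res_less[OF Zw] prime_gt_1_nat[OF assms(1)] by (simp add: ab mod_mult_left_eq)
    finally show "zp_res p (zp_mult p u (zp_mult p (zp_inv p u) w)) n = zp_res p w n" .
  qed
qed

section \<open>Continuous characters are locally constant\<close>

lemma eq_1_if_repeated_squares_near_1:
  fixes z :: "'a :: real_normed_div_algebra"
  assumes near: "\<And>k. norm (z ^ 2 ^ k - 1) < 1/2"
  shows "z = 1"
proof (rule ccontr)
  assume "z \<noteq> 1"
  then have d: "norm (z - 1) > 0" by simp
  have grow: "norm (z ^ 2 ^ k - 1) \<ge> (3/2) ^ k * norm (z - 1)" for k
  proof (induction k)
    case 0
    then show ?case by simp
  next
    case (Suc k)
    let ?y = "z ^ 2 ^ k"
    have "norm (?y + 1) \<ge> 3/2"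
      using norm_triangle_ineq4[of "?y + 1" "?y - 1"] near[of k] by (simp add: norm_numeral)
    moreover have "z ^ 2 ^ Suc k = ?y * ?y"
      by (simp only: power_Suc2 power_mult power2_eq_square)
    then have "z ^ 2 ^ Suc k - 1 = (?y - 1) * (?y + 1)"
      by (simp add: algebra_simps)
    ultimately have "norm (z ^ 2 ^ Suc k - 1) \<ge> norm (?y - 1) * (3/2)"
      by (metis norm_ge_zero norm_mult mult_left_mono)
    also have "norm (?y - 1) * (3/2) \<ge> (3/2) ^ k * norm (z - 1) * (3/2)"
      using Suc.IH by (simp add: mult.commute)
    finally show ?case by (simp add: algebra_simps)
  qed
  obtain k where "(1/2) / norm (z - 1) < (3/2) ^ k"
    using real_arch_pow[of "3/2" "(1/2) / norm (z - 1)"] by auto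
  then have "1/2 < (3/2) ^ k * norm (z - 1)"
    using d by (simp add: field_simps)
  then show False
    using grow[of k] near[of k] by simp
qed

definition zp_one :: "nat \<Rightarrow> nat \<Rightarrow> nat" where
  "zp_one p = zp_of_nat p 1"

lemma zp_res_zp_one: "zp_res p (zp_one p) n = 1 mod p ^ n"
  by (simp add: zp_one_def zp_res_zp_of_nat)

lemma zp_one_in_units: "prime p \<Longrightarrow> zp_one p \<in> Zp_units p"
  using prime_gt_1_nat[of p] by (simp add: Zp_units_def Zp_def zp_one_def zp_of_nat_def)

lemma zp_character_mult:
  "zp_character p chi \<Longrightarrow> u \<in> Zp_units p \<Longrightarrow> w \<in> Zp_units p
    \<Longrightarrow> chi (zp_mult p u w) = chi u * chi w"
  by (simp add: zp_character_def)

lemma zp_character_zp_one: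
  assumes "prime p" "zp_character p chi"
  shows "chi (zp_one p) = 1"
proof -
  have p0: "p > 0" using assms(1) prime_gt_0_nat by blast
  have U: "zp_one p \<in> Zp_units p" and Z: "zp_one p \<in> Zp p"
    using zp_one_in_units[OF assms(1)] by (auto simp: Zp_units_def)
  have "zp_mult p (zp_one p) (zp_one p) = zp_one p"
    by (rule zp_eqI[OF zp_mult_in_Zp[OF p0] Z])
      (simp add: zp_res_zp_mult[OF p0 Z Z] zp_res_zp_one mod_mult_left_eq mod_mult_right_eq)
  then have "chi (zp_one p) * chi (zp_one p) = chi (zp_one p)"
    using zp_character_mult[OF assms(2) U U] by simp
  moreover have "chi (zp_one p) \<noteq> 0"
    using assms(2) U by (simp add: zp_character_def)
  ultimately show ?thesis by simp
qed

text \<open>Repeated squaring stays in \<open>K\<close>, so all the values \<open>chi w ^ 2 ^ k\<close> are close to 1.\<close>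

lemma zp_character_eq_1_if_squares_near_1:
  assumes "zp_character p chi" "K \<subseteq> Zp_units p"
    and square: "\<And>v. v \<in> K \<Longrightarrow> zp_mult p v v \<in> K"
    and near: "\<And>v. v \<in> K \<Longrightarrow> cmod (chi v - 1) < 1/2"
    and "w \<in> K"
  shows "chi w = 1"
proof (rule eq_1_if_repeated_squares_near_1)
  fix k
  have "((\<lambda>v. zp_mult p v v) ^^ k) w \<in> K \<and> chi (((\<lambda>v. zp_mult p v v) ^^ k) w) = chi w ^ 2 ^ k"
  proof (induction k)
    case 0
    then show ?case using \<open>w \<in> K\<close> by simp
  next
    case (Suc k)
    let ?v = "((\<lambda>v. zp_mult p v v) ^^ k) w"
    have "?v \<in> Zp_units p"
      using Suc assms(2) by blast
    then have "chi (zp_mult p ?v ?v) = chi ?v * chi ?v"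
      using zp_character_mult[OF assms(1)] by blast
    moreover have "chi w ^ 2 ^ Suc k = chi w ^ 2 ^ k * chi w ^ 2 ^ k"
      by (simp only: power_Suc2 power_mult power2_eq_square)
    ultimately show ?case
      using Suc square by simp
  qed
  then show "norm (chi w ^ 2 ^ k - 1) < 1/2"
    using near by metis
qed

lemma zp_character_trivial_near_1:
  assumes "prime p" "zp_character p chi" "zp_continuous p chi"
  shows "\<exists>N\<ge>1. \<forall>v\<in>Zp_units p. zp_res p v N = 1 \<longrightarrow> chi v = 1"
proof -
  have p0: "p > 0" and p1: "p > 1"
    using assms(1) prime_gt_0_nat prime_gt_1_nat by blast+
  obtain N0 where N0: "\<And>w. w \<in> Zp_units p \<Longrightarrow> zp_res p w N0 = zp_res p (zp_one p) N0
      \<Longrightarrow> cmod (chi w - chi (zp_one p)) < 1/2"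
    using assms(3) zp_one_in_units[OF assms(1)] unfolding zp_continuous_def
    by (meson half_gt_zero zero_less_one)
  define N where "N = Suc N0"
  have pN: "1 mod p ^ N = 1"
    using p1 by (simp add: N_def)
  define K where "K = {w \<in> Zp_units p. zp_res p w N = 1}"
  have "zp_mult p w w \<in> K" if "w \<in> K" for w
    using that zp_mult_in_units[OF assms(1)] zp_res_zp_mult[OF p0, of w w N] pN
    by (auto simp: K_def Zp_units_def)
  moreover have "cmod (chi w - 1) < 1/2" if "w \<in> K" for w
  proof -
    have "zp_res p w N0 = zp_res p w N mod p ^ N0"
      using zp_res_mod_power[of w p N0 N] that by (simp add: K_def N_def Zp_units_def)
    also have "\<dots> = zp_res p (zp_one p) N0"
      using that by (simp add: K_def zp_res_zp_one)
    finally show ?thesis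
      using N0[of w] that zp_character_zp_one[OF assms(1,2)] by (simp add: K_def)
  qed
  ultimately have "chi w = 1" if "w \<in> K" for w
    using zp_character_eq_1_if_squares_near_1[OF assms(2), of K] that by (auto simp: K_def)
  then show ?thesis
    by (intro exI[of _ N]) (auto simp: K_def N_def)
qed

lemma space_zp_haar: "space (zp_haar p) = Zp p"
  by (auto simp: zp_haar_def space_PiM space_uniform_count_measure Zp_def PiE_def extensional_def)

definition zp_cylinder :: "nat \<Rightarrow> nat \<Rightarrow> nat \<Rightarrow> (nat \<Rightarrow> nat) set" where
  "zp_cylinder p N r = {w \<in> Zp p. zp_res p w N = r}"

lemma zp_cylinder_eq_prod_emb:
  assumes "p > 0" "r < p ^ N"
  shows "zp_cylinder p N r
    = prod_emb UNIV (\<lambda>_. uniform_count_measure {..<p}) {..<N} (\<Pi>\<^sub>E i\<in>{..<N}. {zp_of_nat p r i})"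
proof -
  have digits: "zp_of_nat p r \<in> Zp p"
    using zp_of_nat_in_Zp[OF assms(1)] .
  have "prod_emb UNIV (\<lambda>_. uniform_count_measure {..<p}) {..<N} (\<Pi>\<^sub>E i\<in>{..<N}. {zp_of_nat p r i})
      = (\<Pi>\<^sub>E i\<in>UNIV. if i < N then {zp_of_nat p r i} else {..<p})"
    using assms(1) by (subst prod_emb_PiE)
      (auto simp: space_uniform_count_measure zp_of_nat_def cong: if_cong)
  also have "\<dots> = {w \<in> Zp p. \<forall>i<N. w i = zp_of_nat p r i}"
    using digits by (auto simp: PiE_iff Zp_def) (metis (full_types) lessThan_iff singletonD)+
  also have "\<dots> = zp_cylinder p N r"
    using zp_res_eq_iff[OF _ digits, of _ N] assms(2)
    by (auto simp: zp_cylinder_def zp_res_zp_of_nat)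
  finally show ?thesis ..
qed

lemma sets_zp_cylinder:
  assumes "p > 0" "r < p ^ N"
  shows "zp_cylinder p N r \<in> sets (zp_haar p)"
  unfolding zp_cylinder_eq_prod_emb[OF assms] zp_haar_def
  by (rule sets_PiM_I) (auto simp: sets_uniform_count_measure zp_of_nat_def assms(1))

lemma emeasure_zp_cylinder:
  assumes "p > 0" "r < p ^ N"
  shows "emeasure (zp_haar p) (zp_cylinder p N r) = ennreal (1 / real p ^ N)"
proof -
  have "emeasure (zp_haar p) (zp_cylinder p N r)
      = (\<Prod>i<N. emeasure (uniform_count_measure {..<p}) {zp_of_nat p r i})"
    unfolding zp_cylinder_eq_prod_emb[OF assms] zp_haar_def
    using assms(1)
    by (intro emeasure_PiM_emb)
      (auto intro!: prob_space_uniform_count_measure simp: sets_uniform_count_measure zp_of_nat_def)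
  also have "\<dots> = (\<Prod>i<N. ennreal (1 / real p))"
    using assms(1)
    by (intro prod.cong refl)
      (simp add: emeasure_uniform_count_measure zp_of_nat_def ennreal_of_nat_eq_real_of_nat divide_ennreal)
  also have "\<dots> = ennreal (1 / real p ^ N)"
    by (simp add: ennreal_power power_one_over)
  finally show ?thesis .
qed

lemma integral_zp_haar_res:
  fixes F :: "nat \<Rightarrow> complex"
  assumes "p > 0" "\<And>w. w \<in> Zp p \<Longrightarrow> g w = F (zp_res p w N)"
  shows "(\<integral>w. g w \<partial>zp_haar p) = (\<Sum>r<p ^ N. F r) / of_nat (p ^ N)"
proof -
  let ?cyl = "\<lambda>r w. complex_of_real (indicator (zp_cylinder p N r) w)"
  have "(\<integral>w. g w \<partial>zp_haar p) = (\<integral>w. (\<Sum>r<p ^ N. ?cyl r w * F r) \<partial>zp_haar p)"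
  proof (rule Bochner_Integration.integral_cong[OF refl])
    fix w assume "w \<in> space (zp_haar p)"
    then have w: "w \<in> Zp p" by (simp add: space_zp_haar)
    have "(\<Sum>r<p ^ N. ?cyl r w * F r) = (\<Sum>r\<in>{zp_res p w N}. ?cyl r w * F r)"
      using zp_res_less[OF w, of N] by (intro sum.mono_neutral_right) (auto simp: zp_cylinder_def)
    then show "g w = (\<Sum>r<p ^ N. ?cyl r w * F r)"
      using w assms(2) by (simp add: zp_cylinder_def)
  qed
  also have "\<dots> = (\<Sum>r<p ^ N. \<integral>w. ?cyl r w * F r \<partial>zp_haar p)"
    using emeasure_zp_cylinder[OF assms(1)]
    by (intro Bochner_Integration.integral_sum)
      (auto intro!: integrable_mult_left integrable_of_real sets_zp_cylinder[OF assms(1)])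
  also have "\<dots> = (\<Sum>r<p ^ N. complex_of_real (1 / real p ^ N) * F r)"
    using emeasure_zp_cylinder[OF assms(1)] sets_zp_cylinder[OF assms(1)]
    by (intro sum.cong refl) (simp add: measure_def)
  also have "\<dots> = (\<Sum>r<p ^ N. F r) / of_nat (p ^ N)"
    by (simp add: sum_divide_distrib[symmetric])
  finally show ?thesis .
qed

text \<open>Both \<open>card {r < p\<^sup>N. \<dots>} / p\<^sup>N\<close> and \<open>card {r < p\<^sup>i. \<dots>} / p\<^sup>i\<close> are the Haar measure
  of the set of \<open>w\<close> whose residue modulo \<open>p\<^sup>i\<close> satisfies \<open>P\<close>.\<close>

lemma card_residues_mod_power:
  assumes "p > 0" "i \<le> N"
  shows "card {r. r < p ^ N \<and> P (r mod p ^ i)} * p ^ i = card {r. r < p ^ i \<and> P r} * p ^ N"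
proof -
  let ?g = "\<lambda>w. if P (zp_res p w i) then 1 else 0 :: complex"
  have count: "(\<Sum>r<p ^ n. if Q r then 1 else 0 :: complex) = of_nat (card {r. r < p ^ n \<and> Q r})"
    for n Q by (simp add: sum.If_cases lessThan_def Collect_conj_eq Int_commute)
  have "(\<integral>w. ?g w \<partial>zp_haar p) = (\<Sum>r<p ^ N. if P (r mod p ^ i) then 1 else 0) / of_nat (p ^ N)"
    using zp_res_mod_power[OF _ assms(2)] by (intro integral_zp_haar_res[OF assms(1)]) simp
  moreover have "(\<integral>w. ?g w \<partial>zp_haar p) = (\<Sum>r<p ^ i. if P r then 1 else 0) / of_nat (p ^ i)"
    by (intro integral_zp_haar_res[OF assms(1)]) simp
  ultimately have "of_nat (card {r. r < p ^ N \<and> P (r mod p ^ i)}) / of_nat (p ^ N)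
      = (of_nat (card {r. r < p ^ i \<and> P r}) / of_nat (p ^ i) :: complex)"
    unfolding count by simp
  then have "of_nat (card {r. r < p ^ N \<and> P (r mod p ^ i)} * p ^ i)
      = (of_nat (card {r. r < p ^ i \<and> P r} * p ^ N) :: complex)"
    using assms(1) by (simp add: field_simps)
  then show ?thesis
    by (simp only: of_nat_eq_iff)
qed

section \<open>Character sums over residue classes\<close>

definition res_units :: "nat \<Rightarrow> nat \<Rightarrow> nat set" where
  "res_units p N = {r. r < p ^ N \<and> r mod p \<noteq> 0}"

definition res_principal_units :: "nat \<Rightarrow> nat \<Rightarrow> nat \<Rightarrow> nat set" where
  "res_principal_units p N i = {r. r < p ^ N \<and> r mod p ^ i = 1}"

lemma finite_res_units [simp]: "finite (res_units p N)"
  by (simp add: res_units_def)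

lemma res_principal_units_subset:
  assumes "p > 1" "1 \<le> i"
  shows "res_principal_units p N i \<subseteq> res_units p N"
proof
  fix r assume r: "r \<in> res_principal_units p N i"
  have "r mod p = r mod p ^ i mod p"
    using assms(2) by (simp add: mod_mod_cancel)
  then show "r \<in> res_units p N"
    using r assms(1) by (simp add: res_principal_units_def res_units_def)
qed

lemma card_res_units:
  assumes "p > 0" "1 \<le> N"
  shows "of_nat (card (res_units p N)) / of_nat (p ^ N) = (1 - 1 / of_nat p :: 'a :: field_char_0)"
proof -
  have "{r. r < p ^ 1 \<and> r \<noteq> 0} = {..<p} - {0}" by auto
  then have "card (res_units p N) * p = (p - 1) * p ^ N"
    using card_residues_mod_power[OF assms(1,2), of "\<lambda>r. r \<noteq> 0"] assms(1)
    by (simp add: res_units_def)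
  then have "(of_nat (card (res_units p N) * p) :: 'a) = of_nat ((p - 1) * p ^ N)"
    by (simp only:)
  then have "of_nat (card (res_units p N)) * of_nat p = (of_nat p - 1) * (of_nat (p ^ N) :: 'a)"
    using assms(1) by (simp add: of_nat_diff)
  then show ?thesis
    using assms(1) by (simp add: field_simps)
qed

lemma card_res_principal_units:
  assumes "p > 1" "1 \<le> i" "i \<le> N"
  shows "of_nat (card (res_principal_units p N i)) / of_nat (p ^ N) = (1 / of_nat p ^ i :: 'a :: field_char_0)"
proof -
  have "{r. r < p ^ i \<and> r = 1} = {1}"
    using assms(1,2) one_less_power[of p i] by auto
  then have "card (res_principal_units p N i) * p ^ i = p ^ N"
    using card_residues_mod_power[of p i N "\<lambda>r. r = 1"] assms by (simp add: res_principal_units_def)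
  then have "of_nat (card (res_principal_units p N i)) * of_nat p ^ i = (of_nat (p ^ N) :: 'a)"
    by (simp only: of_nat_mult[symmetric] of_nat_power[symmetric])
  then show ?thesis
    using assms(1) by (simp add: field_simps)
qed

lemma res_units_mult:
  assumes "prime p" "1 \<le> N" "a \<in> res_units p N" "b \<in> res_units p N"
  shows "a * b mod p ^ N \<in> res_units p N"
proof -
  have "\<not> p dvd a" "\<not> p dvd b"
    using assms(3,4) by (auto simp: res_units_def dvd_eq_mod_eq_0)
  then have "\<not> p dvd a * b"
    using assms(1) by (simp add: prime_dvd_mult_iff)
  moreover have "a * b mod p ^ N mod p = a * b mod p"
    using le_imp_power_dvd[OF assms(2), of p] by (simp add: mod_mod_cancel)
  ultimately show ?thesis
    using prime_gt_0_nat[OF assms(1)] by (auto simp: res_units_def dvd_eq_mod_eq_0)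
qed

lemma res_principal_units_mult:
  assumes "i \<le> N" "a \<in> res_principal_units p N i" "b \<in> res_principal_units p N i"
  shows "a * b mod p ^ N \<in> res_principal_units p N i"
proof -
  have a: "a mod p ^ i = 1" and b: "b mod p ^ i = 1"
    using assms(2,3) by (simp_all add: res_principal_units_def)
  have "a * b mod p ^ N mod p ^ i = a * b mod p ^ i"
    using le_imp_power_dvd[OF assms(1), of p] by (rule mod_mod_cancel)
  also have "\<dots> = (a mod p ^ i) * (b mod p ^ i) mod p ^ i"
    by (rule mod_mult_eq[symmetric])
  also have "\<dots> = 1"
    using a b by (metis mod_mod_trivial mult_1)
  moreover have "a < p ^ N"
    using assms(2) by (simp add: res_principal_units_def)
  then have "p ^ N > 0"
    by (rule le_less_trans[OF le0])
  ultimately show ?thesis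
    by (simp add: res_principal_units_def)
qed

lemma res_units_mult_cancel:
  assumes "prime p" "a \<in> res_units p N" "i \<le> N"
  shows "a * s mod p ^ N mod p ^ i = a * t mod p ^ N mod p ^ i \<longleftrightarrow> [s = t] (mod p ^ i)"
proof -
  have "\<not> p dvd a"
    using assms(2) by (simp add: res_units_def dvd_eq_mod_eq_0)
  then have "coprime a (p ^ i)"
    by (rule prime_imp_power_coprime[OF assms(1)])
  have "a * x mod p ^ N mod p ^ i = a * x mod p ^ i" for x
    using le_imp_power_dvd[OF assms(3), of p] by (rule mod_mod_cancel)
  then have "a * s mod p ^ N mod p ^ i = a * t mod p ^ N mod p ^ i \<longleftrightarrow> [a * s = a * t] (mod p ^ i)"
    by (simp only: cong_def)
  also have "\<dots> \<longleftrightarrow> [s = t] (mod p ^ i)"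
    by (rule cong_mult_lcancel_nat[OF \<open>coprime a (p ^ i)\<close>])
  finally show ?thesis .
qed

lemma bij_betw_res_units_mult:
  assumes "prime p" "a \<in> res_units p N" "S \<subseteq> res_units p N"
    and closed: "\<And>s. s \<in> S \<Longrightarrow> a * s mod p ^ N \<in> S"
  shows "bij_betw (\<lambda>s. a * s mod p ^ N) S S"
proof -
  have "inj_on (\<lambda>s. a * s mod p ^ N) S"
  proof
    fix s t assume "s \<in> S" "t \<in> S" "a * s mod p ^ N = a * t mod p ^ N"
    then have "a * s mod p ^ N mod p ^ N = a * t mod p ^ N mod p ^ N"
      by (simp only: mod_mod_trivial)
    then have "[s = t] (mod p ^ N)"
      using res_units_mult_cancel[OF assms(1,2) order_refl] by blast
    moreover have "s < p ^ N" "t < p ^ N"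
      using \<open>s \<in> S\<close> \<open>t \<in> S\<close> assms(3) by (auto simp: res_units_def)
    ultimately show "s = t"
      unfolding cong_def by (metis mod_less)
  qed
  moreover have "finite S"
    using assms(3) by (rule finite_subset) simp
  moreover have "(\<lambda>s. a * s mod p ^ N) ` S \<subseteq> S"
    using closed by blast
  ultimately show ?thesis
    unfolding bij_betw_def using endo_inj_surj by blast
qed

lemma sum_eq_0_if_bij_scales:
  fixes X :: "'b \<Rightarrow> 'a :: idom"
  assumes "bij_betw f S S" "\<And>s. s \<in> S \<Longrightarrow> X (f s) = c * X s" "c \<noteq> 1"
  shows "(\<Sum>s\<in>S. X s) = 0"
proof -
  have "(\<Sum>s\<in>S. X s) = (\<Sum>s\<in>S. X (f s))"
    using sum.reindex_bij_betw[OF assms(1), of X] by simp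
  also have "\<dots> = c * (\<Sum>s\<in>S. X s)"
    using assms(2) by (simp add: sum_distrib_left)
  finally have "(1 - c) * (\<Sum>s\<in>S. X s) = 0"
    by (simp add: algebra_simps)
  then show ?thesis
    using assms(3) by simp
qed

lemma zp_of_nat_in_units: "p > 0 \<Longrightarrow> r mod p \<noteq> 0 \<Longrightarrow> zp_of_nat p r \<in> Zp_units p"
  by (simp add: Zp_units_def zp_of_nat_in_Zp) (simp add: zp_of_nat_def)

lemma zp_units_iff_res_units:
  assumes "u \<in> Zp p" "1 \<le> N"
  shows "u \<in> Zp_units p \<longleftrightarrow> zp_res p u N \<in> res_units p N"
  using zp_res_less[OF assms(1), of N] zp_res_mod_base[OF assms] assms(1)
  by (simp add: Zp_units_def res_units_def)

lemma integral_units_zp_haar_res: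
  fixes F :: "nat \<Rightarrow> complex"
  assumes "p > 0" "1 \<le> N" "\<And>w. w \<in> Zp_units p \<Longrightarrow> g w = F (zp_res p w N)"
  shows "(\<integral>w. indicator (Zp_units p) w * g w \<partial>zp_haar p) = (\<Sum>r\<in>res_units p N. F r) / of_nat (p ^ N)"
proof -
  have "(\<integral>w. indicator (Zp_units p) w * g w \<partial>zp_haar p)
      = (\<Sum>r<p ^ N. if r \<in> res_units p N then F r else 0) / of_nat (p ^ N)"
    using assms(3) zp_units_iff_res_units[OF _ assms(2)]
    by (intro integral_zp_haar_res[OF assms(1)]) (simp add: indicator_def)
  also have "(\<Sum>r<p ^ N. if r \<in> res_units p N then F r else 0)
      = sum F {r \<in> {..<p ^ N}. r \<in> res_units p N}"
    by (rule sum.inter_filter[symmetric]) simp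
  also have "{r \<in> {..<p ^ N}. r \<in> res_units p N} = res_units p N"
    by (auto simp: res_units_def)
  finally show ?thesis .
qed

definition res_character :: "nat \<Rightarrow> ((nat \<Rightarrow> nat) \<Rightarrow> complex) \<Rightarrow> nat \<Rightarrow> complex" where
  "res_character p chi r = chi (zp_of_nat p r)"

locale zp_character_of_level =
  fixes p N :: nat and chi :: "(nat \<Rightarrow> nat) \<Rightarrow> complex"
  assumes prime: "prime p" and level_pos: "1 \<le> N" and character: "zp_character p chi"
    and trivial_on_level: "\<And>v. v \<in> Zp_units p \<Longrightarrow> zp_res p v N = 1 \<Longrightarrow> chi v = 1"
begin

lemma p_pos: "p > 0"
  using prime prime_gt_0_nat by blast

lemma p_gt_1: "p > 1"
  using prime prime_gt_1_nat by blast

lemma chi_eq_if_res_eq: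
  assumes "u \<in> Zp_units p" "w \<in> Zp_units p" "zp_res p u N = zp_res p w N"
  shows "chi u = chi w"
proof -
  define q where "q = zp_mult p (zp_inv p u) w"
  have q: "q \<in> Zp_units p"
    unfolding q_def using zp_mult_in_units[OF prime zp_inv_in_units[OF prime assms(1)] assms(2)] .
  have "zp_res p q N = zp_inv_res p u N * zp_res p u N mod p ^ N"
    using zp_res_zp_mult[OF p_pos, of "zp_inv p u" w N] zp_inv_in_units[OF prime assms(1)] assms(2,3)
    by (simp add: q_def zp_res_zp_inv[OF prime assms(1)] Zp_units_def)
  also have "\<dots> = 1"
    using zp_inv_res[OF prime assms(1), of N] p_gt_1 level_pos
    by (simp add: cong_def mult.commute)
  finally have "chi q = 1"
    using trivial_on_level[OF q] by simp
  moreover have "w = zp_mult p u q"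
    unfolding q_def using zp_mult_zp_inv_cancel[OF prime assms(1,2)] by simp
  ultimately show ?thesis
    using zp_character_mult[OF character assms(1) q] by simp
qed

lemma chi_eq_res_character:
  assumes "w \<in> Zp_units p"
  shows "chi w = res_character p chi (zp_res p w N)"
proof -
  let ?r = "zp_res p w N"
  have "?r mod p \<noteq> 0"
    using zp_units_iff_res_units[of w p N] assms level_pos by (simp add: Zp_units_def res_units_def)
  then have "zp_of_nat p ?r \<in> Zp_units p"
    by (rule zp_of_nat_in_units[OF p_pos])
  moreover have "zp_res p (zp_of_nat p ?r) N = ?r"
    using zp_res_less[of w p N] assms by (simp add: zp_res_zp_of_nat Zp_units_def)
  ultimately show ?thesis
    unfolding res_character_def using chi_eq_if_res_eq[OF assms] by simp
qed

lemma res_character_mult: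
  assumes "a \<in> res_units p N" "b \<in> res_units p N"
  shows "res_character p chi (a * b mod p ^ N) = res_character p chi a * res_character p chi b"
proof -
  have U: "zp_of_nat p a \<in> Zp_units p" "zp_of_nat p b \<in> Zp_units p"
    using assms zp_of_nat_in_units[OF p_pos] by (auto simp: res_units_def)
  have "zp_res p (zp_mult p (zp_of_nat p a) (zp_of_nat p b)) N = a * b mod p ^ N"
    using zp_res_zp_mult[OF p_pos, of "zp_of_nat p a" "zp_of_nat p b" N] U assms
    by (simp add: zp_res_zp_of_nat Zp_units_def res_units_def)
  then have "res_character p chi (a * b mod p ^ N) = chi (zp_mult p (zp_of_nat p a) (zp_of_nat p b))"
    using chi_eq_res_character[OF zp_mult_in_units[OF prime U]] by simp
  then show ?thesis
    using zp_character_mult[OF character U] by (simp add: res_character_def)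
qed

lemma sum_res_character_eq_0:
  assumes "1 \<le> i" "i \<le> N" "S = res_units p N \<or> S = res_principal_units p N i"
    and "a \<in> S" "res_character p chi a \<noteq> 1"
  shows "(\<Sum>s\<in>S. res_character p chi s) = 0"
proof (rule sum_eq_0_if_bij_scales[OF bij_betw_res_units_mult[OF prime] _ assms(5)])
  have S: "S \<subseteq> res_units p N"
    using assms(3) res_principal_units_subset[OF p_gt_1 assms(1)] by blast
  then show a: "a \<in> res_units p N" and "S \<subseteq> res_units p N"
    using assms(4) by auto
  show "a * s mod p ^ N \<in> S" if "s \<in> S" for s
    using assms(3,4) that res_units_mult[OF prime level_pos] res_principal_units_mult[OF assms(2)]
    by blast
  show "res_character p chi (a * s mod p ^ N) = res_character p chi a * res_character p chi s"
    if "s \<in> S" for s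
    using res_character_mult[OF a] that S by blast
qed

end

section \<open>The kernel\<close>

definition shell_kernel :: "real \<Rightarrow> nat \<Rightarrow> nat \<Rightarrow> real" where
  "shell_kernel P m e = (P ^ (m - e) + P ^ e) / (P ^ m - 1)"

lemma shell_kernel_eq:
  fixes P :: real
  assumes "P > 1" "d < m"
  shows "(1 / P ^ a) * (1 / P ^ (a + d)) / (1 / P ^ a)\<^sup>2
     + 1 / (P ^ m - 1) * ((1 / P ^ a) / (1 / P ^ (a + d)) + (1 / P ^ (a + d)) / (1 / P ^ a))
     = shell_kernel P m d"
proof -
  obtain e where m: "m = d + e"
    using assms(2) less_imp_add_positive by blast
  have "P ^ m > 1"
    using assms by (simp add: one_less_power)
  then show ?thesis
    using assms(1) unfolding shell_kernel_def m by (simp add: power_add field_simps power2_eq_square)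
qed

lemma shell_kernel_sym: "e \<le> m \<Longrightarrow> shell_kernel P m (m - e) = shell_kernel P m e"
  by (simp add: shell_kernel_def add.commute)

lemma add_diff_mod_eq:
  fixes j k m :: nat
  assumes "j < m" "k < m"
  shows "(k + m - j) mod m = (if j \<le> k then k - j else k + m - j)"
  using assms by (auto simp: mod_if)

lemma kernelH_distinct_shells:
  assumes "p > 1" "j < m" "k < m" "k \<noteq> j"
  shows "kernelH p m (k, w) (j, u) = shell_kernel (real p) m ((k + m - j) mod m)"
proof -
  have "kernelH p m (k, w) (j, u)
      = (1 / real p ^ j) * (1 / real p ^ k) / (1 / real p ^ min j k)\<^sup>2
        + 1 / (real p ^ m - 1) * ((1 / real p ^ j) / (1 / real p ^ k) + (1 / real p ^ k) / (1 / real p ^ j))"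
    using assms(4) by (simp add: kernelH_def E_abs_def E_abs_diff_def)
  also have "\<dots> = shell_kernel (real p) m ((k + m - j) mod m)"
  proof (cases "j < k")
    case True
    then show ?thesis
      using shell_kernel_eq[of "real p" "k - j" m j] assms add_diff_mod_eq[OF assms(2,3)] by simp
  next
    case False
    then have "(k + m - j) mod m = m - (j - k)"
      using add_diff_mod_eq[OF assms(2,3)] assms(4) by simp
    then show ?thesis
      using shell_kernel_eq[of "real p" "j - k" m k] shell_kernel_sym[of "j - k" m] False assms
      by (simp add: ac_simps)
  qed
  finally show ?thesis .
qed

lemma kernelH_same_shell:
  assumes "p > 1" "w \<noteq> u"
  shows "kernelH p m (j, w) (j, u) = real p ^ (2 * (LEAST i. u i \<noteq> w i)) + 2 / (real p ^ m - 1)"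
proof -
  define L where "L = (LEAST i. u i \<noteq> w i)"
  have "kernelH p m (j, w) (j, u)
      = (1 / real p ^ j) * (1 / real p ^ j) / ((1 / real p ^ j) * (1 / real p ^ L))\<^sup>2 + 2 / (real p ^ m - 1)"
    using assms by (simp add: kernelH_def E_abs_def E_abs_diff_def zp_abs_diff_def L_def)
  also have "(1 / real p ^ j) * (1 / real p ^ j) / ((1 / real p ^ j) * (1 / real p ^ L))\<^sup>2 = real p ^ (2 * L)"
    using assms(1) by (simp add: field_simps power2_eq_square power_mult mult.commute[of 2 L])
  finally show ?thesis
    by (simp add: L_def)
qed

lemma sum_shift_mod:
  fixes g :: "nat \<Rightarrow> 'a :: comm_monoid_add"
  assumes "j < m"
  shows "(\<Sum>k\<in>{..<m} - {j}. g ((k + m - j) mod m)) = (\<Sum>e\<in>{1..<m}. g e)"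
  by (rule sum.reindex_bij_witness[where j = "\<lambda>k. (k + m - j) mod m" and i = "\<lambda>e. (e + j) mod m"])
    (use assms in \<open>auto simp: mod_if\<close>)

lemma power_mod_root_of_unity:
  fixes \<omega> :: "'a :: monoid_mult"
  assumes "\<omega> ^ m = 1"
  shows "\<omega> ^ (n mod m) = \<omega> ^ n"
proof -
  have "\<omega> ^ n = (\<omega> ^ m) ^ (n div m) * \<omega> ^ (n mod m)"
    by (metis div_mult_mod_eq power_add power_mult mult.commute)
  then show ?thesis
    using assms by simp
qed

lemma norm_root_of_unity:
  fixes \<omega> :: complex
  assumes "\<omega> ^ m = 1" "m \<ge> 1"
  shows "cmod \<omega> = 1"
  using power_eq_1_iff[OF assms(1)] assms(2) by auto

lemma geometric_sum_from_1:
  fixes z :: complex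
  assumes "P > 1" "z ^ m = 1" "m \<ge> 1"
  shows "(\<Sum>e\<in>{1..<m}. (of_real P * z) ^ e) = of_real (P ^ m - 1) / (of_real P * z - 1) - 1"
proof -
  have "of_real P * z \<noteq> 1"
  proof
    assume "of_real P * z = 1"
    then have "cmod (of_real P * z) = 1" by simp
    then show False
      using norm_root_of_unity[OF assms(2,3)] assms(1) by (simp add: norm_mult)
  qed
  then have "(\<Sum>e<m. (of_real P * z) ^ e) = ((of_real P * z) ^ m - 1) / (of_real P * z - 1)"
    by (rule geometric_sum)
  moreover have "{..<m} = insert 0 {1..<m}"
    using assms(3) by auto
  moreover have "(of_real P * z) ^ m = of_real (P ^ m)"
    using assms(2) by (simp add: power_mult_distrib)
  ultimately show ?thesis
    by (simp add: algebra_simps)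
qed

lemma sum_shell_kernel_root_of_unity:
  fixes \<omega> :: complex
  assumes "P > 1" "\<omega> ^ m = 1" "m \<ge> 1"
  shows "(\<Sum>e\<in>{1..<m}. of_real (shell_kernel P m e) * \<omega> ^ e)
     = 1 / (of_real P * \<omega> - 1) + 1 / (of_real P * cnj \<omega> - 1) - of_real (2 / (P ^ m - 1))"
proof -
  define Q where "Q = P ^ m - 1"
  have Q: "Q > 0"
    unfolding Q_def using assms by (simp add: one_less_power)
  have "\<omega> * cnj \<omega> = 1"
    using complex_norm_square[of \<omega>] norm_root_of_unity[OF assms(2,3)] by simp
  have cnj_root: "cnj \<omega> ^ m = 1"
    using assms(2) by (metis complex_cnj_one complex_cnj_power)
  have reflect: "(\<Sum>e\<in>{1..<m}. of_real (P ^ (m - e)) * \<omega> ^ e) = (\<Sum>e\<in>{1..<m}. (of_real P * cnj \<omega>) ^ e)"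
  proof (rule sum.reindex_bij_witness[where j = "\<lambda>e. m - e" and i = "\<lambda>e. m - e"])
    fix e assume e: "e \<in> {1..<m}"
    have "cnj \<omega> ^ (m - e) = cnj \<omega> ^ (m - e) * (\<omega> ^ e * \<omega> ^ (m - e))"
      using assms(2) e by (simp add: power_add[symmetric])
    also have "\<dots> = \<omega> ^ e * (\<omega> * cnj \<omega>) ^ (m - e)"
      by (simp add: power_mult_distrib algebra_simps)
    finally show "(of_real P * cnj \<omega>) ^ (m - e) = of_real (P ^ (m - e)) * \<omega> ^ e"
      using \<open>\<omega> * cnj \<omega> = 1\<close> by (simp add: power_mult_distrib)
  qed auto
  have "(\<Sum>e\<in>{1..<m}. of_real (shell_kernel P m e) * \<omega> ^ e)
      = ((\<Sum>e\<in>{1..<m}. of_real (P ^ (m - e)) * \<omega> ^ e) + (\<Sum>e\<in>{1..<m}. (of_real P * \<omega>) ^ e)) / of_real Q"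
    by (simp add: shell_kernel_def Q_def power_mult_distrib sum.distrib sum_divide_distrib
        add_divide_distrib ring_distribs)
  also have "\<dots> = ((of_real Q / (of_real P * cnj \<omega> - 1) - 1) + (of_real Q / (of_real P * \<omega> - 1) - 1)) / of_real Q"
    unfolding reflect geometric_sum_from_1[OF assms] geometric_sum_from_1[OF assms(1) cnj_root assms(3)] Q_def ..
  also have "\<dots> = 1 / (of_real P * \<omega> - 1) + 1 / (of_real P * cnj \<omega> - 1) - of_real (2 / Q)"
    using Q by (simp add: field_simps)
  finally show ?thesis
    by (simp add: Q_def)
qed

lemma sum_shell_kernel:
  assumes "P > 1" "m \<ge> 1"
  shows "(\<Sum>e\<in>{1..<m}. shell_kernel P m e) = 2 / (P - 1) - 2 / (P ^ m - 1)"
proof -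
  have "complex_of_real (\<Sum>e\<in>{1..<m}. shell_kernel P m e) = of_real (2 / (P - 1) - 2 / (P ^ m - 1))"
    using sum_shell_kernel_root_of_unity[OF assms(1) _ assms(2), of 1]
    by (simp add: add_divide_distrib[symmetric])
  then show ?thesis
    by (simp only: of_real_eq_iff)
qed

definition kernel_step :: "real \<Rightarrow> nat \<Rightarrow> real" where
  "kernel_step P i = P ^ (2 * i) * (1 - 1 / P\<^sup>2)"

lemma one_plus_sum_kernel_step:
  assumes "P \<noteq> 0"
  shows "1 + (\<Sum>i\<in>{1..L}. kernel_step P i) = P ^ (2 * L)"
proof (induction L)
  case 0
  then show ?case by simp
next
  case (Suc L)
  define y where "y = P ^ (2 * L)"
  have y: "P ^ (2 * Suc L) = y * P\<^sup>2"
    by (simp add: y_def power2_eq_square)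
  have "1 + (\<Sum>i\<in>{1..Suc L}. kernel_step P i) = (1 + (\<Sum>i\<in>{1..L}. kernel_step P i)) + kernel_step P (Suc L)"
    by simp
  also have "\<dots> = y + y * P\<^sup>2 * (1 - 1 / P\<^sup>2)"
    using Suc.IH y by (simp add: y_def kernel_step_def)
  also have "\<dots> = y * P\<^sup>2"
    using assms by (simp add: field_simps)
  finally show ?case
    using y by simp
qed

lemma sum_kernel_step_div_power:
  assumes "P \<noteq> 0" "n \<ge> 1"
  shows "(\<Sum>i\<in>{1..<n}. kernel_step P i / P ^ i) = (P + 1) * (P ^ n - P) / P\<^sup>2"
  using assms(2)
proof (induction n rule: nat_induct_at_least)
  case base
  then show ?case by simp
next
  case (Suc n)
  define y where "y = P ^ n"
  have "y \<noteq> 0"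
    using assms(1) by (simp add: y_def)
  have "(\<Sum>i\<in>{1..<Suc n}. kernel_step P i / P ^ i) = (\<Sum>i\<in>{1..<n}. kernel_step P i / P ^ i) + kernel_step P n / P ^ n"
    using Suc.hyps by simp
  also have "\<dots> = (P + 1) * (y - P) / P\<^sup>2 + y * y * (1 - 1 / P\<^sup>2) / y"
    using Suc.IH by (simp add: y_def kernel_step_def power_mult power2_eq_square mult.commute)
  also have "\<dots> = (P + 1) * (P * y - P) / P\<^sup>2"
    using assms(1) \<open>y \<noteq> 0\<close> by (simp add: field_simps power2_eq_square)
  finally show ?case
    by (simp add: y_def)
qed

lemma all_less_Least_iff:
  fixes P :: "nat \<Rightarrow> bool"
  assumes "P l"
  shows "(\<forall>k<i. \<not> P k) \<longleftrightarrow> i \<le> (LEAST k. P k)"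
proof
  assume "\<forall>k<i. \<not> P k"
  then show "i \<le> (LEAST k. P k)"
    using LeastI[of P l] assms not_less by blast
next
  assume "i \<le> (LEAST k. P k)"
  then show "\<forall>k<i. \<not> P k"
    using not_less_Least[of _ P] by (meson order_less_le_trans)
qed

text \<open>The kernel inside a shell depends on the first digit where \<open>w\<close> and \<open>u\<close> differ; as a sum
  of indicators of the nested balls \<open>u + p\<^sup>i \<int>\<^sub>p\<close> it becomes a function of the residue
  of \<open>w\<close> modulo \<open>p\<^sup>N\<close>.\<close>

lemma power_Least_diff_eq_sum:
  assumes "p > 0" "u \<in> Zp p" "w \<in> Zp p" "zp_res p w N \<noteq> zp_res p u N"
  shows "real p ^ (2 * (LEAST i. u i \<noteq> w i))
    = 1 + (\<Sum>i\<in>{1..<N}. if zp_res p w N mod p ^ i = zp_res p u N mod p ^ i then kernel_step (real p) i else 0)"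
proof -
  define L where "L = (LEAST i. u i \<noteq> w i)"
  obtain l where l: "l < N" "u l \<noteq> w l"
    using zp_res_eq_iff[OF assms(3,2), of N] assms(4) by auto
  have agree_iff: "zp_res p w N mod p ^ i = zp_res p u N mod p ^ i \<longleftrightarrow> i \<le> L" if "i \<le> N" for i
  proof -
    have "zp_res p w N mod p ^ i = zp_res p u N mod p ^ i \<longleftrightarrow> zp_res p u i = zp_res p w i"
      using zp_res_mod_power[OF assms(2) that] zp_res_mod_power[OF assms(3) that] by auto
    also have "\<dots> \<longleftrightarrow> (\<forall>k<i. \<not> u k \<noteq> w k)"
      using zp_res_eq_iff[OF assms(2,3)] by simp
    also have "\<dots> \<longleftrightarrow> i \<le> L"
      unfolding L_def using l(2) by (rule all_less_Least_iff)
    finally show ?thesis .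
  qed
  have "L < N"
    using Least_le[of "\<lambda>i. u i \<noteq> w i" l] l by (simp add: L_def)
  have "(\<Sum>i\<in>{1..<N}. if zp_res p w N mod p ^ i = zp_res p u N mod p ^ i then kernel_step (real p) i else 0)
      = (\<Sum>i\<in>{1..<N}. if i \<le> L then kernel_step (real p) i else 0)"
    by (rule sum.cong) (simp_all add: agree_iff)
  also have "\<dots> = sum (kernel_step (real p)) {i \<in> {1..<N}. i \<le> L}"
    by (rule sum.inter_filter[symmetric]) simp
  also have "{i \<in> {1..<N}. i \<le> L} = {1..L}"
    using \<open>L < N\<close> by auto
  finally show ?thesis
    using one_plus_sum_kernel_step[of "real p" L] assms(1) by (simp add: L_def)
qed

lemma sum_weighted_by_indicators:
  fixes f :: "'b \<Rightarrow> complex"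
  assumes "finite U"
  shows "(\<Sum>s\<in>U. of_real (a + (\<Sum>i\<in>I. if Q i s then b i else 0)) * f s)
    = of_real a * (\<Sum>s\<in>U. f s) + (\<Sum>i\<in>I. of_real (b i) * (\<Sum>s\<in>{s \<in> U. Q i s}. f s))"
proof -
  have "(\<Sum>s\<in>U. of_real (a + (\<Sum>i\<in>I. if Q i s then b i else 0)) * f s)
      = (\<Sum>s\<in>U. of_real a * f s + (\<Sum>i\<in>I. if Q i s then of_real (b i) * f s else 0))"
    by (auto simp: distrib_right sum_distrib_right intro!: sum.cong)
  also have "\<dots> = of_real a * (\<Sum>s\<in>U. f s) + (\<Sum>i\<in>I. \<Sum>s\<in>U. if Q i s then of_real (b i) * f s else 0)"
    by (simp add: sum.distrib sum_distrib_left sum.swap[of _ U])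
  also have "\<dots> = of_real a * (\<Sum>s\<in>U. f s) + (\<Sum>i\<in>I. of_real (b i) * (\<Sum>s\<in>{s \<in> U. Q i s}. f s))"
    using assms by (simp add: sum.inter_filter[symmetric] sum_distrib_left)
  finally show ?thesis .
qed

definition same_shell_weight :: "nat \<Rightarrow> nat \<Rightarrow> nat \<Rightarrow> nat \<Rightarrow> nat \<Rightarrow> real" where
  "same_shell_weight p m N a r = 1 + 2 / (real p ^ m - 1)
     + (\<Sum>i\<in>{1..<N}. if r mod p ^ i = a mod p ^ i then kernel_step (real p) i else 0)"

lemma kernelH_same_shell_eq_weight:
  assumes "p > 1" "u \<in> Zp p" "w \<in> Zp p" "zp_res p w N \<noteq> zp_res p u N"
  shows "kernelH p m (j, w) (j, u) = same_shell_weight p m N (zp_res p u N) (zp_res p w N)"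
proof -
  have "w \<noteq> u"
    using assms(4) by auto
  then show ?thesis
    using kernelH_same_shell[OF assms(1)] power_Least_diff_eq_sum[of p u w N] assms
    by (simp add: same_shell_weight_def)
qed

lemma same_shell_weight_mult:
  assumes "prime p" "a \<in> res_units p N"
  shows "same_shell_weight p m N a (a * s mod p ^ N) = same_shell_weight p m N 1 s"
proof -
  have "a * 1 mod p ^ N = a"
    using assms(2) by (simp add: res_units_def)
  then have "a * s mod p ^ N mod p ^ i = a mod p ^ i \<longleftrightarrow> s mod p ^ i = 1 mod p ^ i" if "i \<le> N" for i
    using res_units_mult_cancel[OF assms that, of s 1] by (simp add: cong_def)
  then show ?thesis
    unfolding same_shell_weight_def by (intro arg_cong2[where f = "(+)"] refl sum.cong) simp_all
qed

lemma sum_same_shell_weight: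
  fixes f :: "nat \<Rightarrow> complex"
  assumes "p > 1"
  shows "(\<Sum>s\<in>res_units p N. of_real (same_shell_weight p m N 1 s) * f s)
    = of_real (1 + 2 / (real p ^ m - 1)) * (\<Sum>s\<in>res_units p N. f s)
      + (\<Sum>i\<in>{1..<N}. of_real (kernel_step (real p) i) * (\<Sum>s\<in>res_principal_units p N i. f s))"
proof -
  have "(\<Sum>s\<in>res_units p N. of_real (same_shell_weight p m N 1 s) * f s)
      = of_real (1 + 2 / (real p ^ m - 1)) * (\<Sum>s\<in>res_units p N. f s)
        + (\<Sum>i\<in>{1..<N}. of_real (kernel_step (real p) i)
            * (\<Sum>s\<in>{s \<in> res_units p N. s mod p ^ i = 1 mod p ^ i}. f s))"
    unfolding same_shell_weight_def by (rule sum_weighted_by_indicators) simp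
  also have "\<dots> = of_real (1 + 2 / (real p ^ m - 1)) * (\<Sum>s\<in>res_units p N. f s)
      + (\<Sum>i\<in>{1..<N}. of_real (kernel_step (real p) i) * (\<Sum>s\<in>res_principal_units p N i. f s))"
  proof (intro arg_cong2[where f = "(+)"] refl sum.cong)
    fix i assume i: "i \<in> {1..<N}"
    then have "1 mod p ^ i = 1"
      using one_less_power[OF assms, of i] assms by simp
    then have "{s \<in> res_units p N. s mod p ^ i = 1 mod p ^ i} = res_principal_units p N i"
      using res_principal_units_subset[OF assms, of i N] i
      by (auto simp: res_principal_units_def res_units_def)
    then show "of_real (kernel_step (real p) i) * (\<Sum>s\<in>{s \<in> res_units p N. s mod p ^ i = 1 mod p ^ i}. f s)
        = of_real (kernel_step (real p) i) * (\<Sum>s\<in>res_principal_units p N i. f s)"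
      by simp
  qed
  finally show ?thesis .
qed

context zp_character_of_level
begin

lemma conductor_props:
  shows conductor_pos: "1 \<le> conductor p chi" and conductor_le_level: "conductor p chi \<le> N"
    and trivial_on_conductor: "\<And>v. v \<in> Zp_units p \<Longrightarrow> zp_res p v (conductor p chi) = 1 \<Longrightarrow> chi v = 1"
proof -
  let ?Q = "\<lambda>n. 1 \<le> n \<and> (\<forall>u\<in>Zp_units p. zp_res p u n = 1 \<longrightarrow> chi u = 1)"
  have "?Q N"
    using level_pos trivial_on_level by blast
  then have "?Q (conductor p chi)" "conductor p chi \<le> N"
    unfolding conductor_def by (rule LeastI, rule Least_le)
  then show "1 \<le> conductor p chi" "conductor p chi \<le> N"
    and "\<And>v. v \<in> Zp_units p \<Longrightarrow> zp_res p v (conductor p chi) = 1 \<Longrightarrow> chi v = 1"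
    by blast+
qed

lemma nontrivial_below_conductor:
  assumes "1 \<le> i" "i < conductor p chi"
  obtains v where "v \<in> Zp_units p" "zp_res p v i = 1" "chi v \<noteq> 1"
  using not_less_Least[of i "\<lambda>n. 1 \<le> n \<and> (\<forall>u\<in>Zp_units p. zp_res p u n = 1 \<longrightarrow> chi u = 1)"]
    assms unfolding conductor_def by blast

lemma res_character_principal_units_eq_1:
  assumes "conductor p chi \<le> i" "i \<le> N" "s \<in> res_principal_units p N i"
  shows "res_character p chi s = 1"
proof -
  let ?n = "conductor p chi"
  have "1 \<le> i"
    using conductor_pos assms(1) by linarith
  then have "s \<in> res_units p N"
    using res_principal_units_subset[OF p_gt_1] assms(3) by blast
  then have v: "zp_of_nat p s \<in> Zp_units p"
    using zp_of_nat_in_units[OF p_pos] by (simp add: res_units_def)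
  have "zp_res p (zp_of_nat p s) ?n = s mod p ^ i mod p ^ ?n"
    using le_imp_power_dvd[OF assms(1), of p] by (simp add: zp_res_zp_of_nat mod_mod_cancel)
  also have "\<dots> = 1"
    using assms(3) one_less_power[OF p_gt_1, of ?n] conductor_pos p_gt_1
    by (simp add: res_principal_units_def)
  finally show ?thesis
    using trivial_on_conductor[OF v] by (simp add: res_character_def)
qed

lemma res_character_principal_units_nontrivial:
  assumes "1 \<le> i" "i < conductor p chi"
  shows "\<exists>a\<in>res_principal_units p N i. res_character p chi a \<noteq> 1"
proof -
  obtain v where v: "v \<in> Zp_units p" "zp_res p v i = 1" "chi v \<noteq> 1"
    using nontrivial_below_conductor[OF assms] .
  have "i \<le> N"
    using assms(2) conductor_le_level by linarith
  then have "zp_res p v N \<in> res_principal_units p N i"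
    using v(1,2) zp_res_less[of v p N] zp_res_mod_power[of v p i N]
    by (simp add: res_principal_units_def Zp_units_def)
  then show ?thesis
    using v(1,3) chi_eq_res_character by metis
qed

lemma res_character_units_nontrivial:
  assumes "\<not> zp_trivial p chi"
  shows "\<exists>a\<in>res_units p N. res_character p chi a \<noteq> 1"
proof -
  obtain v where v: "v \<in> Zp_units p" "chi v \<noteq> 1"
    using assms by (auto simp: zp_trivial_def)
  then have "zp_res p v N \<in> res_units p N"
    using zp_units_iff_res_units[of v p N] level_pos by (simp add: Zp_units_def)
  then show ?thesis
    using v chi_eq_res_character by metis
qed

lemma res_character_trivial:
  assumes "zp_trivial p chi" "s \<in> res_units p N"
  shows "res_character p chi s = 1"
  using assms zp_of_nat_in_units[OF p_pos] by (simp add: zp_trivial_def res_character_def res_units_def)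

lemma sum_res_character_minus_1:
  assumes "1 \<le> i" "i \<le> N" "S = res_units p N \<or> S = res_principal_units p N i"
    and "a \<in> S" "res_character p chi a \<noteq> 1"
  shows "(\<Sum>s\<in>S. res_character p chi s - 1) = - of_nat (card S)"
  using sum_res_character_eq_0[OF assms] by (simp add: sum_subtractf)

lemma mean_res_character_minus_1_units:
  assumes "\<not> zp_trivial p chi"
  shows "(\<Sum>s\<in>res_units p N. res_character p chi s - 1) / of_nat (p ^ N) = - (1 - 1 / of_nat p)"
  using res_character_units_nontrivial[OF assms] level_pos card_res_units[OF p_pos level_pos, where 'a = complex]
    sum_res_character_minus_1[of 1 "res_units p N"] by auto

lemma mean_res_character_minus_1_principal_units:
  assumes "1 \<le> i" "i \<le> N"
  shows "(\<Sum>s\<in>res_principal_units p N i. res_character p chi s - 1) / of_nat (p ^ N)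
    = (if i < conductor p chi then - (1 / of_nat p ^ i) else 0)"
proof (cases "i < conductor p chi")
  case True
  then obtain a where "a \<in> res_principal_units p N i" "res_character p chi a \<noteq> 1"
    using res_character_principal_units_nontrivial[OF assms(1)] by blast
  then show ?thesis
    using True sum_res_character_minus_1[OF assms] card_res_principal_units[OF p_gt_1 assms]
    by simp
next
  case False
  then show ?thesis
    using res_character_principal_units_eq_1[OF _ assms(2)] by simp
qed

end

lemma c_p_eq:
  assumes "p > 1"
  shows "c_p p = real p * (real p - 1) / (real p + 1)"
proof -
  define P where "P = real p"
  have "P > 1"
    using assms by (simp add: P_def)
  moreover have "0 < P * P"
    using \<open>P > 1\<close> by simp
  ultimately have P: "P \<noteq> 0" "P - 1 \<noteq> 0" "P + 1 \<noteq> 0" "P + P * P \<noteq> 0"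
    by linarith+
  have "1 - 1 / P\<^sup>2 = (1 - 1 / P) * (1 + 1 / P)" "1 - 1 / P \<noteq> 0"
    using P by (simp_all add: field_simps power2_eq_square)
  then have "c_p p = P * (1 - 1 / P) / (1 + 1 / P)"
    by (simp add: c_p_def P_def power2_eq_square)
  also have "\<dots> = P * (P - 1) / (P + 1)"
    using P by (simp add: field_simps)
  finally show ?thesis
    by (simp add: P_def)
qed

lemma nontrivial_eigenvalue_eq:
  fixes P c :: real
  assumes "P > 1" "n \<ge> 1"
  shows "- (P * (P - 1) / (P + 1))
      * ((- (1 + c) * (1 - 1 / P) - (P + 1) * (P ^ n - P) / P\<^sup>2) - (1 - 1 / P) * (2 / (P - 1) - c))
    = (P - 1) * P ^ (n - 1)"
proof -
  define y where "y = P ^ (n - 1)"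
  have "0 < P * P"
    using assms(1) by simp
  then have P: "P \<noteq> 0" "P - 1 \<noteq> 0" "P + 1 \<noteq> 0" "P + P * P \<noteq> 0"
    using assms(1) by linarith+
  have Pn: "P ^ n = P * y"
    using assms(2) by (simp add: y_def power_eq_if)
  have "(- (1 + c) * (1 - 1 / P) - (P + 1) * (P ^ n - P) / P\<^sup>2) - (1 - 1 / P) * (2 / (P - 1) - c)
      = - ((P + 1) * y / P)"
    unfolding Pn using P by (simp add: field_simps power2_eq_square)
  moreover have "- (P * (P - 1) / (P + 1)) * (- ((P + 1) * y / P)) = (P - 1) * y"
    using P by (simp add: field_simps)
  ultimately show ?thesis
    by (simp add: y_def)
qed

lemma trivial_eigenvalue_eq:
  fixes \<omega> :: complex and P :: real
  assumes "P > 1" "cmod \<omega> = 1"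
  shows "- of_real (P * (P - 1) / (P + 1))
      * (of_real (1 - 1 / P) * (1 / (of_real P * \<omega> - 1) + 1 / (of_real P * cnj \<omega> - 1) - 2 / (of_real P - 1)))
    = of_real P * (of_real P - 1) * (2 - \<omega> - cnj \<omega>) / ((of_real P)\<^sup>2 - of_real P * (\<omega> + cnj \<omega>) + 1)"
proof -
  define Q where "Q = complex_of_real P"
  define t where "t = \<omega> + cnj \<omega>"
  define D where "D = Q\<^sup>2 - Q * t + 1"
  have nz: "Q * \<omega> - 1 \<noteq> 0" "Q * cnj \<omega> - 1 \<noteq> 0"
    using assms by (auto simp: Q_def norm_mult dest!: arg_cong[where f = cmod])
  have "\<omega> * cnj \<omega> = 1"
    using complex_norm_square[of \<omega>] assms(2) by simp
  then have D: "(Q * \<omega> - 1) * (Q * cnj \<omega> - 1) = D"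
    unfolding D_def t_def by (simp add: algebra_simps power2_eq_square)
  have "D \<noteq> 0"
    using D nz by force
  have Q: "Q - 1 \<noteq> 0" "Q + 1 \<noteq> 0" "Q \<noteq> 0"
    using assms(1) by (auto simp: Q_def complex_eq_iff)
  have "1 / (Q * \<omega> - 1) + 1 / (Q * cnj \<omega> - 1) = (Q * t - 2) / D"
    unfolding D[symmetric] t_def using nz by (simp add: field_simps)
  moreover have "(Q * t - 2) / D - 2 / (Q - 1) = Q * (Q + 1) * (t - 2) / ((Q - 1) * D)"
    using Q \<open>D \<noteq> 0\<close> by (simp add: field_simps D_def power2_eq_square)
  moreover have "complex_of_real (P * (P - 1) / (P + 1)) = Q * (Q - 1) / (Q + 1)"
    "complex_of_real (1 - 1 / P) = (Q - 1) / Q"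
    using Q by (simp_all add: Q_def field_simps)
  ultimately have "- of_real (P * (P - 1) / (P + 1))
      * (of_real (1 - 1 / P) * (1 / (Q * \<omega> - 1) + 1 / (Q * cnj \<omega> - 1) - 2 / (Q - 1)))
      = - (Q * (Q - 1) / (Q + 1)) * ((Q - 1) / Q * (Q * (Q + 1) * (t - 2) / ((Q - 1) * D)))"
    by simp
  also have "(Q - 1) / Q * (Q * (Q + 1) * (t - 2) / ((Q - 1) * D)) = (Q + 1) * ((t - 2) / D)"
    using Q \<open>D \<noteq> 0\<close> by (simp add: field_simps)
  also have "- (Q * (Q - 1) / (Q + 1)) * ((Q + 1) * ((t - 2) / D)) = - (Q * (Q - 1)) * ((t - 2) / D)"
    using Q by simp
  also have "\<dots> = Q * (Q - 1) * (2 - t) / D"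
    using \<open>D \<noteq> 0\<close> by (simp add: field_simps)
  finally show ?thesis
    by (simp add: Q_def t_def D_def)
qed

section \<open>The operator on characters\<close>

definition shell_integral ::
    "nat \<Rightarrow> nat \<Rightarrow> (nat \<times> (nat \<Rightarrow> nat) \<Rightarrow> complex) \<Rightarrow> nat \<times> (nat \<Rightarrow> nat) \<Rightarrow> nat \<Rightarrow> complex" where
  "shell_integral p m \<phi> x k =
     (\<integral>w. indicator (Zp_units p) w * (complex_of_real (kernelH p m (k, w) x) * (\<phi> (k, w) - \<phi> x)) \<partial>zp_haar p)"

lemma Dop_eq_sum_shell_integral:
  "Dop p m \<phi> x = - complex_of_real (c_p p) * (\<Sum>k<m. shell_integral p m \<phi> x k)"
  by (simp add: Dop_def shell_integral_def)

context zp_character_of_level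
begin

lemma shell_integral_other_shell:
  assumes "j < m" "k < m" "k \<noteq> j" "u \<in> Zp_units p"
  shows "shell_integral p m (\<lambda>(k, u). \<omega> ^ k * chi u) (j, u) k
    = of_real (shell_kernel (real p) m ((k + m - j) mod m))
      * (\<omega> ^ k * (\<Sum>r\<in>res_units p N. res_character p chi r) / of_nat (p ^ N)
         - \<omega> ^ j * chi u * (1 - 1 / of_nat p))"
proof -
  define H where "H = complex_of_real (shell_kernel (real p) m ((k + m - j) mod m))"
  define A where "A = (\<Sum>r\<in>res_units p N. res_character p chi r)"
  have "shell_integral p m (\<lambda>(k, u). \<omega> ^ k * chi u) (j, u) k
      = (\<Sum>r\<in>res_units p N. H * (\<omega> ^ k * res_character p chi r - \<omega> ^ j * chi u)) / of_nat (p ^ N)"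
    unfolding shell_integral_def
    using kernelH_distinct_shells[OF p_gt_1 assms(1-3)] chi_eq_res_character
    by (intro integral_units_zp_haar_res[OF p_pos level_pos]) (simp add: H_def)
  also have "(\<Sum>r\<in>res_units p N. H * (\<omega> ^ k * res_character p chi r - \<omega> ^ j * chi u))
      = H * (\<omega> ^ k * A - \<omega> ^ j * chi u * of_nat (card (res_units p N)))"
    by (simp add: A_def sum_subtractf sum_distrib_left right_diff_distrib mult.assoc)
  also have "\<dots> / of_nat (p ^ N)
      = H * (\<omega> ^ k * A / of_nat (p ^ N) - \<omega> ^ j * chi u * (of_nat (card (res_units p N)) / of_nat (p ^ N)))"
    by (simp only: times_divide_eq_right[symmetric] diff_divide_distrib)
  also have "of_nat (card (res_units p N)) / of_nat (p ^ N) = (1 - 1 / of_nat p :: complex)"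
    by (rule card_res_units[OF p_pos level_pos])
  finally show ?thesis
    by (simp only: H_def A_def)
qed

lemma shell_integral_same_shell_res:
  assumes "u \<in> Zp_units p"
  shows "shell_integral p m (\<lambda>(k, u). \<omega> ^ k * chi u) (j, u) j
    = (\<Sum>r\<in>res_units p N. of_real (same_shell_weight p m N (zp_res p u N) r)
        * (\<omega> ^ j * res_character p chi r - \<omega> ^ j * chi u)) / of_nat (p ^ N)"
  unfolding shell_integral_def
proof (rule integral_units_zp_haar_res[OF p_pos level_pos])
  fix w assume w: "w \<in> Zp_units p"
  show "of_real (kernelH p m (j, w) (j, u))
      * ((\<lambda>(k, u). \<omega> ^ k * chi u) (j, w) - (\<lambda>(k, u). \<omega> ^ k * chi u) (j, u))
    = of_real (same_shell_weight p m N (zp_res p u N) (zp_res p w N))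
      * (\<omega> ^ j * res_character p chi (zp_res p w N) - \<omega> ^ j * chi u)"
  proof (cases "zp_res p w N = zp_res p u N")
    case True
    then show ?thesis
      using chi_eq_if_res_eq[OF w assms] chi_eq_res_character[OF w] by simp
  next
    case False
    then show ?thesis
      using kernelH_same_shell_eq_weight[OF p_gt_1 _ _ False] w assms chi_eq_res_character[OF w]
      by (simp add: Zp_units_def)
  qed
qed

lemma shell_integral_same_shell:
  assumes "u \<in> Zp_units p"
  shows "shell_integral p m (\<lambda>(k, u). \<omega> ^ k * chi u) (j, u) j
    = \<omega> ^ j * chi u
      * (\<Sum>s\<in>res_units p N. of_real (same_shell_weight p m N 1 s) * (res_character p chi s - 1))
      / of_nat (p ^ N)"
proof -
  define uN where "uN = zp_res p u N"
  define G where
    "G r = of_real (same_shell_weight p m N uN r) * (\<omega> ^ j * res_character p chi r - \<omega> ^ j * chi u)" for r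
  have uN: "uN \<in> res_units p N"
    using zp_units_iff_res_units[of u p N] level_pos assms by (simp add: uN_def Zp_units_def)
  have chi_u: "chi u = res_character p chi uN"
    using chi_eq_res_character[OF assms] by (simp add: uN_def)
  have "(\<Sum>r\<in>res_units p N. G r) = (\<Sum>s\<in>res_units p N. G (uN * s mod p ^ N))"
    using sum.reindex_bij_betw[OF bij_betw_res_units_mult[OF prime uN subset_refl
          res_units_mult[OF prime level_pos uN]], of G]
    by simp
  also have "\<dots> = (\<Sum>s\<in>res_units p N.
      \<omega> ^ j * chi u * (of_real (same_shell_weight p m N 1 s) * (res_character p chi s - 1)))"
    using same_shell_weight_mult[OF prime uN] res_character_mult[OF uN] chi_u
    by (intro sum.cong refl) (simp add: G_def algebra_simps)
  finally show ?thesis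
    unfolding shell_integral_same_shell_res[OF assms] by (simp add: G_def uN_def sum_distrib_left)
qed

lemma shell_integral_same_shell_nontrivial:
  assumes "\<not> zp_trivial p chi" "u \<in> Zp_units p"
  shows "shell_integral p m (\<lambda>(k, u). \<omega> ^ k * chi u) (j, u) j
    = \<omega> ^ j * chi u * of_real (- (1 + 2 / (real p ^ m - 1)) * (1 - 1 / real p)
        - (real p + 1) * (real p ^ conductor p chi - real p) / (real p)\<^sup>2)"
proof -
  define c where "c = 2 / (real p ^ m - 1)"
  define n where "n = conductor p chi"
  define mean where "mean S = (\<Sum>s\<in>S. res_character p chi s - 1) / of_nat (p ^ N)" for S
  have "shell_integral p m (\<lambda>(k, u). \<omega> ^ k * chi u) (j, u) j
      = \<omega> ^ j * chi u * (of_real (1 + c) * mean (res_units p N)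
        + (\<Sum>i\<in>{1..<N}. of_real (kernel_step (real p) i) * mean (res_principal_units p N i)))"
    unfolding shell_integral_same_shell[OF assms(2)] sum_same_shell_weight[OF p_gt_1] mean_def c_def
    by (simp only: add_divide_distrib sum_divide_distrib times_divide_eq_right[symmetric])
  also have "of_real (1 + c) * mean (res_units p N) = - of_real ((1 + c) * (1 - 1 / real p))"
    unfolding mean_def mean_res_character_minus_1_units[OF assms(1)] by (simp add: algebra_simps)
  also have "(\<Sum>i\<in>{1..<N}. of_real (kernel_step (real p) i) * mean (res_principal_units p N i))
      = (\<Sum>i\<in>{1..<N}. if i \<in> {1..<n} then - of_real (kernel_step (real p) i / real p ^ i) else 0)"
    using mean_res_character_minus_1_principal_units by (intro sum.cong refl) (simp add: mean_def n_def)
  also have "\<dots> = (\<Sum>i\<in>{1..<N} \<inter> {1..<n}. - of_real (kernel_step (real p) i / real p ^ i))"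
    by (rule sum.inter_restrict[symmetric]) simp
  also have "{1..<N} \<inter> {1..<n} = {1..<n}"
    using conductor_le_level by (auto simp: n_def)
  also have "(\<Sum>i\<in>{1..<n}. - of_real (kernel_step (real p) i / real p ^ i))
      = - of_real (\<Sum>i\<in>{1..<n}. kernel_step (real p) i / real p ^ i)"
    by (simp add: sum_negf)
  also have "(\<Sum>i\<in>{1..<n}. kernel_step (real p) i / real p ^ i) = (real p + 1) * (real p ^ n - real p) / (real p)\<^sup>2"
    using sum_kernel_step_div_power[of "real p" n] p_pos conductor_pos by (simp add: n_def)
  also have "- of_real ((1 + c) * (1 - 1 / real p)) + - of_real ((real p + 1) * (real p ^ n - real p) / (real p)\<^sup>2)
      = complex_of_real (- (1 + c) * (1 - 1 / real p) - (real p + 1) * (real p ^ n - real p) / (real p)\<^sup>2)"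
    by (simp only: of_real_add of_real_minus mult_minus_left diff_conv_add_uminus)
  finally show ?thesis
    by (simp only: c_def n_def)
qed

lemma sum_other_shells:
  assumes "\<omega> ^ m = 1" "j < m" "u \<in> Zp_units p"
  shows "(\<Sum>k\<in>{..<m} - {j}. shell_integral p m (\<lambda>(k, u). \<omega> ^ k * chi u) (j, u) k)
    = (\<Sum>e\<in>{1..<m}. of_real (shell_kernel (real p) m e)
        * (\<omega> ^ j * \<omega> ^ e * (\<Sum>r\<in>res_units p N. res_character p chi r) / of_nat (p ^ N)
           - \<omega> ^ j * chi u * (1 - 1 / of_nat p)))"
proof -
  have "(\<Sum>k\<in>{..<m} - {j}. shell_integral p m (\<lambda>(k, u). \<omega> ^ k * chi u) (j, u) k)
    = (\<Sum>k\<in>{..<m} - {j}. (\<lambda>e. of_real (shell_kernel (real p) m e)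
        * (\<omega> ^ j * \<omega> ^ e * (\<Sum>r\<in>res_units p N. res_character p chi r) / of_nat (p ^ N)
           - \<omega> ^ j * chi u * (1 - 1 / of_nat p))) ((k + m - j) mod m))"
  proof (rule sum.cong[OF refl])
    fix k assume k: "k \<in> {..<m} - {j}"
    have "\<omega> ^ k = \<omega> ^ (j + (k + m - j)) "
      using assms(1,2) by (simp add: power_add)
    also have "\<dots> = \<omega> ^ j * \<omega> ^ ((k + m - j) mod m)"
      unfolding power_add power_mod_root_of_unity[OF assms(1)] ..
    finally have shift: "\<omega> ^ k = \<omega> ^ j * \<omega> ^ ((k + m - j) mod m)" .
    show "shell_integral p m (\<lambda>(k, u). \<omega> ^ k * chi u) (j, u) k = (\<lambda>e. of_real (shell_kernel (real p) m e)
        * (\<omega> ^ j * \<omega> ^ e * (\<Sum>r\<in>res_units p N. res_character p chi r) / of_nat (p ^ N)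
           - \<omega> ^ j * chi u * (1 - 1 / of_nat p))) ((k + m - j) mod m)"
      using shell_integral_other_shell[OF assms(2) _ _ assms(3), of k \<omega>] k unfolding shift by simp
  qed
  also have "\<dots> = (\<Sum>e\<in>{1..<m}. of_real (shell_kernel (real p) m e)
        * (\<omega> ^ j * \<omega> ^ e * (\<Sum>r\<in>res_units p N. res_character p chi r) / of_nat (p ^ N)
           - \<omega> ^ j * chi u * (1 - 1 / of_nat p)))"
    by (rule sum_shift_mod[OF assms(2)])
  finally show ?thesis .
qed

lemma sum_other_shells_nontrivial:
  assumes "\<not> zp_trivial p chi" "\<omega> ^ m = 1" "j < m" "u \<in> Zp_units p"
  shows "(\<Sum>k\<in>{..<m} - {j}. shell_integral p m (\<lambda>(k, u). \<omega> ^ k * chi u) (j, u) k)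
    = \<omega> ^ j * chi u * of_real (- (1 - 1 / real p)) * of_real (2 / (real p - 1) - 2 / (real p ^ m - 1))"
proof -
  have "(\<Sum>r\<in>res_units p N. res_character p chi r) = 0"
    using res_character_units_nontrivial[OF assms(1)] sum_res_character_eq_0[of 1] level_pos by blast
  then have "(\<Sum>k\<in>{..<m} - {j}. shell_integral p m (\<lambda>(k, u). \<omega> ^ k * chi u) (j, u) k)
      = (\<Sum>e\<in>{1..<m}. \<omega> ^ j * chi u * of_real (- (1 - 1 / real p)) * of_real (shell_kernel (real p) m e))"
    unfolding sum_other_shells[OF assms(2-4)] by (intro sum.cong refl) (simp add: algebra_simps)
  also have "\<dots> = \<omega> ^ j * chi u * of_real (- (1 - 1 / real p)) * of_real (\<Sum>e\<in>{1..<m}. shell_kernel (real p) m e)"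
    by (simp only: sum_distrib_left[symmetric] of_real_sum)
  also have "(\<Sum>e\<in>{1..<m}. shell_kernel (real p) m e) = 2 / (real p - 1) - 2 / (real p ^ m - 1)"
    using sum_shell_kernel[of "real p" m] p_gt_1 assms(3) by simp
  finally show ?thesis .
qed

lemma sum_other_shells_trivial:
  assumes "zp_trivial p chi" "\<omega> ^ m = 1" "j < m" "u \<in> Zp_units p"
  shows "(\<Sum>k\<in>{..<m} - {j}. shell_integral p m (\<lambda>(k, u). \<omega> ^ k * chi u) (j, u) k)
    = \<omega> ^ j * of_real (1 - 1 / real p)
      * (1 / (of_real (real p) * \<omega> - 1) + 1 / (of_real (real p) * cnj \<omega> - 1) - 2 / (of_real (real p) - 1))"
proof -
  define P where "P = real p"
  have m: "m \<ge> 1" and P: "P > 1"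
    using assms(3) p_gt_1 by (simp_all add: P_def)
  have "res_character p chi s = 1" if "s \<in> res_units p N" for s
    using res_character_trivial[OF assms(1) that] .
  then have mean: "(\<Sum>r\<in>res_units p N. res_character p chi r) / of_nat (p ^ N) = 1 - 1 / of_nat p"
    using card_res_units[OF p_pos level_pos, where 'a = complex] by simp
  have chi_u: "chi u = 1"
    using assms(1,4) by (simp add: zp_trivial_def)
  have "(\<Sum>k\<in>{..<m} - {j}. shell_integral p m (\<lambda>(k, u). \<omega> ^ k * chi u) (j, u) k)
      = (\<Sum>e\<in>{1..<m}. \<omega> ^ j * of_real (1 - 1 / P)
          * (of_real (shell_kernel P m e) * \<omega> ^ e - of_real (shell_kernel P m e)))"
    unfolding sum_other_shells[OF assms(2-4)] times_divide_eq_right[symmetric] mean chi_u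
    by (intro sum.cong refl) (simp add: P_def algebra_simps)
  also have "\<dots> = \<omega> ^ j * of_real (1 - 1 / P)
      * ((\<Sum>e\<in>{1..<m}. of_real (shell_kernel P m e) * \<omega> ^ e) - of_real (\<Sum>e\<in>{1..<m}. shell_kernel P m e))"
    by (simp only: sum_distrib_left[symmetric] sum_subtractf of_real_sum)
  finally show ?thesis
    unfolding sum_shell_kernel_root_of_unity[OF P assms(2) m] sum_shell_kernel[OF P m]
    by (simp add: P_def)
qed

lemma Dop_character_nontrivial:
  assumes "\<not> zp_trivial p chi" "\<omega> ^ m = 1" "j < m" "u \<in> Zp_units p"
  shows "Dop p m (\<lambda>(k, u). \<omega> ^ k * chi u) (j, u)
    = (of_nat p - 1) * of_nat p ^ (conductor p chi - 1) * (\<omega> ^ j * chi u)"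
proof -
  define P where "P = real p"
  define c where "c = 2 / (P ^ m - 1)"
  define X where "X = - (1 + c) * (1 - 1 / P) - (P + 1) * (P ^ conductor p chi - P) / P\<^sup>2"
  define R where "R = X - (1 - 1 / P) * (2 / (P - 1) - c)"
  let ?I = "shell_integral p m (\<lambda>(k, u). \<omega> ^ k * chi u) (j, u)"
  have "Dop p m (\<lambda>(k, u). \<omega> ^ k * chi u) (j, u) = - of_real (c_p p) * (?I j + (\<Sum>k\<in>{..<m} - {j}. ?I k))"
    unfolding Dop_eq_sum_shell_integral using assms(3) by (simp add: sum.remove)
  also have "?I j + (\<Sum>k\<in>{..<m} - {j}. ?I k)
      = \<omega> ^ j * chi u * (of_real X + of_real (- (1 - 1 / P)) * of_real (2 / (P - 1) - c))"
    unfolding shell_integral_same_shell_nontrivial[OF assms(1,4)] sum_other_shells_nontrivial[OF assms]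
    by (simp only: X_def P_def c_def distrib_left mult.assoc)
  also have "of_real X + of_real (- (1 - 1 / P)) * of_real (2 / (P - 1) - c) = complex_of_real R"
    unfolding R_def
    by (simp only: of_real_add of_real_diff of_real_mult of_real_minus mult_minus_left diff_conv_add_uminus)
  also have "- of_real (c_p p) * (\<omega> ^ j * chi u * of_real R)
      = \<omega> ^ j * chi u * of_real (- (P * (P - 1) / (P + 1)) * R)"
    by (simp add: c_p_eq[OF p_gt_1] P_def)
  also have "- (P * (P - 1) / (P + 1)) * R = (P - 1) * P ^ (conductor p chi - 1)"
    unfolding R_def X_def using p_gt_1 by (intro nontrivial_eigenvalue_eq conductor_pos) (simp add: P_def)
  finally show ?thesis
    by (simp add: P_def)
qed

lemma Dop_character_trivial:
  assumes "zp_trivial p chi" "\<omega> ^ m = 1" "j < m" "u \<in> Zp_units p"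
  shows "Dop p m (\<lambda>(k, u). \<omega> ^ k * chi u) (j, u)
    = of_nat p * (of_nat p - 1) * (2 - \<omega> - cnj \<omega>) / ((of_nat p)\<^sup>2 - of_nat p * (\<omega> + cnj \<omega>) + 1)
      * (\<omega> ^ j * chi u)"
proof -
  define P where "P = real p"
  let ?I = "shell_integral p m (\<lambda>(k, u). \<omega> ^ k * chi u) (j, u)"
  let ?S = "1 / (of_real P * \<omega> - 1) + 1 / (of_real P * cnj \<omega> - 1) - 2 / (of_real P - 1) :: complex"
  have "?I j = 0"
    using shell_integral_same_shell[OF assms(4)] res_character_trivial[OF assms(1)] by simp
  then have "Dop p m (\<lambda>(k, u). \<omega> ^ k * chi u) (j, u) = - of_real (c_p p) * (\<Sum>k\<in>{..<m} - {j}. ?I k)"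
    unfolding Dop_eq_sum_shell_integral using assms(3) by (simp add: sum.remove)
  also have "\<dots> = \<omega> ^ j * (- of_real (P * (P - 1) / (P + 1)) * (of_real (1 - 1 / P) * ?S))"
    unfolding sum_other_shells_trivial[OF assms] c_p_eq[OF p_gt_1] P_def by (simp only: mult_ac mult_minus_left)
  also have "\<dots> = \<omega> ^ j * (of_real P * (of_real P - 1) * (2 - \<omega> - cnj \<omega>)
      / ((of_real P)\<^sup>2 - of_real P * (\<omega> + cnj \<omega>) + 1))"
    using p_gt_1 norm_root_of_unity[OF assms(2)] assms(3)
    by (subst trivial_eigenvalue_eq) (simp_all add: P_def)
  finally show ?thesis
    using assms(1,4) by (simp add: P_def zp_trivial_def)
qed

end

theorem mainTheorem2:
  fixes p m :: nat and \<omega> :: complex and chi :: "(nat \<Rightarrow> nat) \<Rightarrow> complex"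
  assumes "prime p" and "m \<ge> 1" and "\<omega> ^ m = 1"
    and "zp_character p chi" and "zp_continuous p chi"
  shows "(\<not> zp_trivial p chi \<longrightarrow>
           (\<forall>x\<in>Eset p m. Dop p m (\<lambda>(k, u). \<omega> ^ k * chi u) x =
              (of_nat p - 1) * of_nat p ^ (conductor p chi - 1) * ((\<lambda>(k, u). \<omega> ^ k * chi u) x)))
       \<and> (zp_trivial p chi \<longrightarrow>
           (\<forall>x\<in>Eset p m. Dop p m (\<lambda>(k, u). \<omega> ^ k * chi u) x =
              (of_nat p * (of_nat p - 1) * (2 - \<omega> - cnj \<omega>)
                / ((of_nat p)\<^sup>2 - of_nat p * (\<omega> + cnj \<omega>) + 1))
              * ((\<lambda>(k, u). \<omega> ^ k * chi u) x)))"
proof -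
  obtain N where "N \<ge> 1" and "\<forall>v\<in>Zp_units p. zp_res p v N = 1 \<longrightarrow> chi v = 1"
    using zp_character_trivial_near_1[OF assms(1,4,5)] by blast
  then interpret zp_character_of_level p N chi
    using assms(1,4) by unfold_locales auto
  show ?thesis
  proof (intro conjI impI ballI)
    fix x assume "\<not> zp_trivial p chi" "x \<in> Eset p m"
    then show "Dop p m (\<lambda>(k, u). \<omega> ^ k * chi u) x
        = (of_nat p - 1) * of_nat p ^ (conductor p chi - 1) * ((\<lambda>(k, u). \<omega> ^ k * chi u) x)"
      using Dop_character_nontrivial[OF _ assms(3)] by (auto simp: Eset_def)
  next
    fix x assume "zp_trivial p chi" "x \<in> Eset p m"
    then show "Dop p m (\<lambda>(k, u). \<omega> ^ k * chi u) x
        = (of_nat p * (of_nat p - 1) * (2 - \<omega> - cnj \<omega>) / ((of_nat p)\<^sup>2 - of_nat p * (\<omega> + cnj \<omega>) + 1))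
          * ((\<lambda>(k, u). \<omega> ^ k * chi u) x)"
      using Dop_character_trivial[OF _ assms(3)] by (auto simp: Eset_def)
  qed
qed

end
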